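(* Let $T$ be a bimonad on a left closed monoidal category $\mathcal C$. The following are equivalent: (i) $T$ is a left Hopf monad; (ii) the monoidal category $\mathcal C^T$ is left closed and the forgetful functor $U_T\colon\mathcal C^T\to\mathcal C$ is left closed; (iii) $T$ admits a left (binary) antipode. Moreover, in that case a left internal Hom of $T$-modules $(M,r),(N,t)$ is $([M,N]^l,\,[M,t]^l\,s^l_{M,N}\,T[r,N]^l)$ with evaluation $\mathrm{ev}^M_N$. (The analogous statement holds for right closed $\mathcal C$, right Hopf monads and right antipodes.)
   Context: Monoidal categories are strict. A bimonad on $\mathcal C$ is a monad $(T,\mu,\eta)$ with a comonoidal structure $T_2(X,Y)\colon T(X\otimes Y)\to TX\otimes TY$, $T_0\colon T\mathbb 1\to\mathbb 1$ (coassociative, counital) such that $\mu,\eta$ are comonoidal natural transformations. $\mathcal C^T$ is the category of $T$-modules, monoidal with $(M,r)\otimes(N,s)=(M\otimes N,(r\otimes s)T_2(M,N))$, unit $(\mathbb 1,T_0)$; $U_T$ is strict monoidal. $T$ is a left Hopf monad if $H^l_{X,Y}=(TX\otimes\mu_Y)T_2(X,TY)\colon T(X\otimes TY)\to TX\otimes TY$ is invertible for all $X,Y$. A monoidal category is left closed if each $?\otimes X$ has a right adjoint $[X,?]^l$, with counit $\mathrm{ev}^X_Y\colon[X,Y]^l\otimes X\to Y$ and unit $\mathrm{coev}^X_Y\colon Y\to[X,Y\otimes X]^l$; $[-,-]^l$ is a functor $\mathcal C^{op}\times\mathcal C\to\mathcal C$. A strong monoidal functor $U$ is left closed if the canonical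 maps $U[X,Y]^l\to[UX,UY]^l$ (adjoint to $U(\mathrm{ev}^X_Y)U_2([X,Y]^l,X)$) are isomorphisms. A left (binary) antipode for $T$ is a natural transformation $s^l_{X,Y}\colon T[TX,Y]^l\to[X,TY]^l$ such that for all $X,Y$: (1) $T\big(\mathrm{ev}^X_Y([\eta_X,Y]^l\otimes X)\big)=\mathrm{ev}^{TX}_{TY}\big(s^l_{TX,Y}\,T[\mu_X,Y]^l\otimes TX\big)T_2([TX,Y]^l,X)$; (2) $[X,TY\otimes\eta_X]^l\,\mathrm{coev}^X_{TY}=[X,(TY\otimes\mu_X)T_2(Y,TX)]^l\,s^l_{X,Y\otimes TX}\,T(\mathrm{coev}^{TX}_Y)$. *)

theory Defs
  imports Main
begin

text \<open>Categories given by explicit data: objects, hom-sets, composition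
  (cmp g f = g after f) and identities.\<close>

record ('o, 'm) cat =
  c_ob   :: "'o set"
  c_hom  :: "'o \<Rightarrow> 'o \<Rightarrow> 'm set"
  c_comp :: "'m \<Rightarrow> 'm \<Rightarrow> 'm"
  c_id   :: "'o \<Rightarrow> 'm"

record ('o, 'm) mcat = "('o, 'm) cat" +
  c_tens_o :: "'o \<Rightarrow> 'o \<Rightarrow> 'o"
  c_tens_m :: "'m \<Rightarrow> 'm \<Rightarrow> 'm"
  c_unit   :: "'o"

definition category :: "('o, 'm, 'x) cat_scheme \<Rightarrow> bool" where
  "category C \<longleftrightarrow>
     (\<forall>a b. c_hom C a b \<noteq> {} \<longrightarrow> a \<in> c_ob C \<and> b \<in> c_ob C) \<and>
     (\<forall>a b a' b' f. f \<in> c_hom C a b \<longrightarrow> f \<in> c_hom C a' b' \<longrightarrow> a = a' \<and> b = b') \<and>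
     (\<forall>a \<in> c_ob C. c_id C a \<in> c_hom C a a) \<and>
     (\<forall>a b c f g. f \<in> c_hom C a b \<longrightarrow> g \<in> c_hom C b c \<longrightarrow> c_comp C g f \<in> c_hom C a c) \<and>
     (\<forall>a b f. f \<in> c_hom C a b \<longrightarrow> c_comp C f (c_id C a) = f \<and> c_comp C (c_id C b) f = f) \<and>
     (\<forall>a b c d f g h. f \<in> c_hom C a b \<longrightarrow> g \<in> c_hom C b c \<longrightarrow> h \<in> c_hom C c d \<longrightarrow>
        c_comp C h (c_comp C g f) = c_comp C (c_comp C h g) f)"

definition iso :: "('o, 'm, 'x) cat_scheme \<Rightarrow> 'm \<Rightarrow> 'o \<Rightarrow> 'o \<Rightarrow> bool" where
  "iso C f a b \<longleftrightarrow> f \<in> c_hom C a b \<and>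
     (\<exists>g \<in> c_hom C b a. c_comp C g f = c_id C a \<and> c_comp C f g = c_id C b)"

definition strict_monoidal :: "('o, 'm, 'x) mcat_scheme \<Rightarrow> bool" where
  "strict_monoidal C \<longleftrightarrow> category C \<and>
     c_unit C \<in> c_ob C \<and>
     (\<forall>a \<in> c_ob C. \<forall>b \<in> c_ob C. c_tens_o C a b \<in> c_ob C) \<and>
     (\<forall>a b c d f g. f \<in> c_hom C a b \<longrightarrow> g \<in> c_hom C c d \<longrightarrow>
        c_tens_m C f g \<in> c_hom C (c_tens_o C a c) (c_tens_o C b d)) \<and>
     (\<forall>a \<in> c_ob C. \<forall>b \<in> c_ob C. c_tens_m C (c_id C a) (c_id C b) = c_id C (c_tens_o C a b)) \<and>
     (\<forall>a b c a' b' c' f g f' g'. f \<in> c_hom C a b \<longrightarrow> g \<in> c_hom C b c \<longrightarrow>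
        f' \<in> c_hom C a' b' \<longrightarrow> g' \<in> c_hom C b' c' \<longrightarrow>
        c_tens_m C (c_comp C g f) (c_comp C g' f') = c_comp C (c_tens_m C g g') (c_tens_m C f f')) \<and>
     (\<forall>a \<in> c_ob C. \<forall>b \<in> c_ob C. \<forall>c \<in> c_ob C.
        c_tens_o C (c_tens_o C a b) c = c_tens_o C a (c_tens_o C b c)) \<and>
     (\<forall>a b c d e h f g k. f \<in> c_hom C a b \<longrightarrow> g \<in> c_hom C c d \<longrightarrow> k \<in> c_hom C e h \<longrightarrow>
        c_tens_m C (c_tens_m C f g) k = c_tens_m C f (c_tens_m C g k)) \<and>
     (\<forall>a \<in> c_ob C. c_tens_o C (c_unit C) a = a \<and> c_tens_o C a (c_unit C) = a) \<and>
     (\<forall>a b f. f \<in> c_hom C a b \<longrightarrow>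
        c_tens_m C (c_id C (c_unit C)) f = f \<and> c_tens_m C f (c_id C (c_unit C)) = f)"

definition is_left_ihom :: "('o, 'm, 'x) mcat_scheme \<Rightarrow> 'o \<Rightarrow> 'o \<Rightarrow> 'o \<Rightarrow> 'm \<Rightarrow> bool" where
  "is_left_ihom C X Y H e \<longleftrightarrow> H \<in> c_ob C \<and> e \<in> c_hom C (c_tens_o C H X) Y \<and>
     (\<forall>A \<in> c_ob C. \<forall>f \<in> c_hom C (c_tens_o C A X) Y.
        \<exists>!g. g \<in> c_hom C A H \<and> c_comp C e (c_tens_m C g (c_id C X)) = f)"

definition left_closed_via :: "('o, 'm, 'x) mcat_scheme \<Rightarrow> ('o \<Rightarrow> 'o \<Rightarrow> 'o) \<Rightarrow> ('o \<Rightarrow> 'o \<Rightarrow> 'm) \<Rightarrow> bool" where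
  "left_closed_via C H e \<longleftrightarrow> (\<forall>X \<in> c_ob C. \<forall>Y \<in> c_ob C. is_left_ihom C X Y (H X Y) (e X Y))"

definition left_closed :: "('o, 'm, 'x) mcat_scheme \<Rightarrow> bool" where
  "left_closed C \<longleftrightarrow> (\<exists>H e. left_closed_via C H e)"

text \<open>Chosen left closed structure of \<open>C\<close>: internal Hom on objects \<open>ih X Y = [X,Y]\<^sup>l\<close>,
  its action on morphisms \<open>ihm f g = [f,g]\<^sup>l\<close> (contravariant in \<open>f\<close>), evaluation
  \<open>ev X Y\<close> and coevaluation \<open>coev X Y : Y \<rightarrow> [X, Y \<otimes> X]\<^sup>l\<close>.\<close>

record ('o, 'm) lclosed =
  ih   :: "'o \<Rightarrow> 'o \<Rightarrow> 'o"
  ihm  :: "'m \<Rightarrow> 'm \<Rightarrow> 'm"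
  ev   :: "'o \<Rightarrow> 'o \<Rightarrow> 'm"
  coev :: "'o \<Rightarrow> 'o \<Rightarrow> 'm"

definition left_closed_data :: "('o, 'm, 'x) mcat_scheme \<Rightarrow> ('o, 'm) lclosed \<Rightarrow> bool" where
  "left_closed_data C L \<longleftrightarrow> left_closed_via C (ih L) (ev L) \<and>
     (\<forall>X X' Y Y' f g. f \<in> c_hom C X' X \<longrightarrow> g \<in> c_hom C Y Y' \<longrightarrow>
        ihm L f g \<in> c_hom C (ih L X Y) (ih L X' Y') \<and>
        c_comp C (ev L X' Y') (c_tens_m C (ihm L f g) (c_id C X'))
          = c_comp C g (c_comp C (ev L X Y) (c_tens_m C (c_id C (ih L X Y)) f))) \<and>
     (\<forall>X \<in> c_ob C. \<forall>Y \<in> c_ob C.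
        coev L X Y \<in> c_hom C Y (ih L X (c_tens_o C Y X)) \<and>
        c_comp C (ev L X (c_tens_o C Y X)) (c_tens_m C (coev L X Y) (c_id C X))
          = c_id C (c_tens_o C Y X))"

record ('o, 'm) bimon =
  tob  :: "'o \<Rightarrow> 'o"
  tmor :: "'m \<Rightarrow> 'm"
  mu   :: "'o \<Rightarrow> 'm"
  eta  :: "'o \<Rightarrow> 'm"
  t2   :: "'o \<Rightarrow> 'o \<Rightarrow> 'm"
  t0   :: "'m"

definition bimonad :: "('o, 'm, 'x) mcat_scheme \<Rightarrow> ('o, 'm) bimon \<Rightarrow> bool" where
  "bimonad C T \<longleftrightarrow>
     \<comment> \<open>functor\<close>
     (\<forall>X \<in> c_ob C. tob T X \<in> c_ob C \<and> tmor T (c_id C X) = c_id C (tob T X)) \<and>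
     (\<forall>a b f. f \<in> c_hom C a b \<longrightarrow> tmor T f \<in> c_hom C (tob T a) (tob T b)) \<and>
     (\<forall>a b c f g. f \<in> c_hom C a b \<longrightarrow> g \<in> c_hom C b c \<longrightarrow>
        tmor T (c_comp C g f) = c_comp C (tmor T g) (tmor T f)) \<and>
     \<comment> \<open>monad\<close>
     (\<forall>X \<in> c_ob C. mu T X \<in> c_hom C (tob T (tob T X)) (tob T X) \<and> eta T X \<in> c_hom C X (tob T X)) \<and>
     (\<forall>a b f. f \<in> c_hom C a b \<longrightarrow>
        c_comp C (mu T b) (tmor T (tmor T f)) = c_comp C (tmor T f) (mu T a) \<and>
        c_comp C (eta T b) f = c_comp C (tmor T f) (eta T a)) \<and>
     (\<forall>X \<in> c_ob C. c_comp C (mu T X) (tmor T (mu T X)) = c_comp C (mu T X) (mu T (tob T X)) \<and>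
        c_comp C (mu T X) (eta T (tob T X)) = c_id C (tob T X) \<and>
        c_comp C (mu T X) (tmor T (eta T X)) = c_id C (tob T X)) \<and>
     \<comment> \<open>comonoidal functor\<close>
     (\<forall>X \<in> c_ob C. \<forall>Y \<in> c_ob C.
        t2 T X Y \<in> c_hom C (tob T (c_tens_o C X Y)) (c_tens_o C (tob T X) (tob T Y))) \<and>
     t0 T \<in> c_hom C (tob T (c_unit C)) (c_unit C) \<and>
     (\<forall>a b c d f g. f \<in> c_hom C a b \<longrightarrow> g \<in> c_hom C c d \<longrightarrow>
        c_comp C (t2 T b d) (tmor T (c_tens_m C f g))
          = c_comp C (c_tens_m C (tmor T f) (tmor T g)) (t2 T a c)) \<and>
     (\<forall>X \<in> c_ob C. \<forall>Y \<in> c_ob C. \<forall>Z \<in> c_ob C.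
        c_comp C (c_tens_m C (t2 T X Y) (c_id C (tob T Z))) (t2 T (c_tens_o C X Y) Z)
          = c_comp C (c_tens_m C (c_id C (tob T X)) (t2 T Y Z)) (t2 T X (c_tens_o C Y Z))) \<and>
     (\<forall>X \<in> c_ob C.
        c_comp C (c_tens_m C (t0 T) (c_id C (tob T X))) (t2 T (c_unit C) X) = c_id C (tob T X) \<and>
        c_comp C (c_tens_m C (c_id C (tob T X)) (t0 T)) (t2 T X (c_unit C)) = c_id C (tob T X)) \<and>
     \<comment> \<open>mu and eta are comonoidal natural transformations\<close>
     (\<forall>X \<in> c_ob C. \<forall>Y \<in> c_ob C.
        c_comp C (t2 T X Y) (mu T (c_tens_o C X Y))
          = c_comp C (c_tens_m C (mu T X) (mu T Y))
              (c_comp C (t2 T (tob T X) (tob T Y)) (tmor T (t2 T X Y))) \<and>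
        c_comp C (t2 T X Y) (eta T (c_tens_o C X Y)) = c_tens_m C (eta T X) (eta T Y)) \<and>
     c_comp C (t0 T) (mu T (c_unit C)) = c_comp C (t0 T) (tmor T (t0 T)) \<and>
     c_comp C (t0 T) (eta T (c_unit C)) = c_id C (c_unit C)"

definition em_ob :: "('o, 'm, 'x) mcat_scheme \<Rightarrow> ('o, 'm) bimon \<Rightarrow> ('o \<times> 'm) set" where
  "em_ob C T = {(M, r). M \<in> c_ob C \<and> r \<in> c_hom C (tob T M) M \<and>
      c_comp C r (tmor T r) = c_comp C r (mu T M) \<and> c_comp C r (eta T M) = c_id C M}"

definition EM :: "('o, 'm, 'x) mcat_scheme \<Rightarrow> ('o, 'm) bimon \<Rightarrow> ('o \<times> 'm, 'm) mcat" where
  "EM C T = \<lparr> c_ob = em_ob C T,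
     c_hom = (\<lambda>(M, r) (N, s). {f. (M, r) \<in> em_ob C T \<and> (N, s) \<in> em_ob C T \<and>
                f \<in> c_hom C M N \<and> c_comp C s (tmor T f) = c_comp C f r}),
     c_comp = c_comp C,
     c_id = (\<lambda>(M, r). c_id C M),
     c_tens_o = (\<lambda>(M, r) (N, s). (c_tens_o C M N, c_comp C (c_tens_m C r s) (t2 T M N))),
     c_tens_m = c_tens_m C,
     c_unit = (c_unit C, t0 T) \<rparr>"

definition left_hopf :: "('o, 'm, 'x) mcat_scheme \<Rightarrow> ('o, 'm) bimon \<Rightarrow> bool" where
  "left_hopf C T \<longleftrightarrow> (\<forall>X \<in> c_ob C. \<forall>Y \<in> c_ob C.
     iso C (c_comp C (c_tens_m C (c_id C (tob T X)) (mu T Y)) (t2 T X (tob T Y)))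
           (tob T (c_tens_o C X (tob T Y))) (c_tens_o C (tob T X) (tob T Y)))"

text \<open>The (strict monoidal) forgetful functor \<open>U\<^sub>T\<close> is left closed w.r.t. a left closed
  structure \<open>(H, e)\<close> of \<open>C\<^sup>T\<close>: the canonical comparison map
  \<open>U[(M,r),(N,s)] \<rightarrow> [M,N]\<^sup>l\<close> (the unique map adjoint to \<open>U(e)\<close>) is an isomorphism.\<close>

definition forgetful_left_closed ::
  "('o, 'm, 'x) mcat_scheme \<Rightarrow> ('o, 'm) lclosed \<Rightarrow> ('o, 'm) bimon \<Rightarrow>
   ('o \<times> 'm \<Rightarrow> 'o \<times> 'm \<Rightarrow> 'o \<times> 'm) \<Rightarrow> ('o \<times> 'm \<Rightarrow> 'o \<times> 'm \<Rightarrow> 'm) \<Rightarrow> bool" where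
  "forgetful_left_closed C L T H e \<longleftrightarrow>
     (\<forall>M r N s. (M, r) \<in> em_ob C T \<longrightarrow> (N, s) \<in> em_ob C T \<longrightarrow>
        (\<exists>\<phi>. \<phi> \<in> c_hom C (fst (H (M, r) (N, s))) (ih L M N) \<and>
            c_comp C (ev L M N) (c_tens_m C \<phi> (c_id C M)) = e (M, r) (N, s) \<and>
            iso C \<phi> (fst (H (M, r) (N, s))) (ih L M N)))"

definition left_antipode ::
  "('o, 'm, 'x) mcat_scheme \<Rightarrow> ('o, 'm) lclosed \<Rightarrow> ('o, 'm) bimon \<Rightarrow> ('o \<Rightarrow> 'o \<Rightarrow> 'm) \<Rightarrow> bool" where
  "left_antipode C L T s \<longleftrightarrow>
     (\<forall>X \<in> c_ob C. \<forall>Y \<in> c_ob C.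
        s X Y \<in> c_hom C (tob T (ih L (tob T X) Y)) (ih L X (tob T Y))) \<and>
     \<comment> \<open>naturality in \<open>X\<close> (contravariant) and \<open>Y\<close>\<close>
     (\<forall>X X' Y Y' f g. f \<in> c_hom C X' X \<longrightarrow> g \<in> c_hom C Y Y' \<longrightarrow>
        c_comp C (s X' Y') (tmor T (ihm L (tmor T f) g)) = c_comp C (ihm L f (tmor T g)) (s X Y)) \<and>
     \<comment> \<open>axiom (1)\<close>
     (\<forall>X \<in> c_ob C. \<forall>Y \<in> c_ob C.
        tmor T (c_comp C (ev L X Y) (c_tens_m C (ihm L (eta T X) (c_id C Y)) (c_id C X)))
        = c_comp C (ev L (tob T X) (tob T Y))
            (c_comp C (c_tens_m C (c_comp C (s (tob T X) Y) (tmor T (ihm L (mu T X) (c_id C Y))))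
                                  (c_id C (tob T X)))
                      (t2 T (ih L (tob T X) Y) X))) \<and>
     \<comment> \<open>axiom (2)\<close>
     (\<forall>X \<in> c_ob C. \<forall>Y \<in> c_ob C.
        c_comp C (ihm L (c_id C X) (c_tens_m C (c_id C (tob T Y)) (eta T X))) (coev L X (tob T Y))
        = c_comp C (ihm L (c_id C X) (c_comp C (c_tens_m C (c_id C (tob T Y)) (mu T X)) (t2 T Y (tob T X))))
            (c_comp C (s X (c_tens_o C Y (tob T X))) (tmor T (coev L (tob T X) Y))))"

definition ihom_action ::
  "('o, 'm, 'x) mcat_scheme \<Rightarrow> ('o, 'm) lclosed \<Rightarrow> ('o, 'm) bimon \<Rightarrow> ('o \<Rightarrow> 'o \<Rightarrow> 'm) \<Rightarrow>
   'o \<Rightarrow> 'm \<Rightarrow> 'o \<Rightarrow> 'm \<Rightarrow> 'm" where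
  "ihom_action C L T s M r N t =
     c_comp C (ihm L (c_id C M) t) (c_comp C (s M N) (tmor T (ihm L r (c_id C N))))"

end

theory Submission
  imports Defs
begin

(* (iii) => (ii): axiom (2) of the antipode gives sections of the fusion operators along
     1 (x) eta; therefore partial actions are split epimorphisms and can be cancelled.
     Axiom (1) makes evaluation linear for the action on [M,N]; cancellation of partial
     actions shows that transposes of linear maps are linear, which yields associativity of
     the action and the universal property of the internal Hom in C^T.
   (ii) => (i): the inverse of H_{X,Y} is obtained by transposing the unit along the
     internal Hom  [(TY,mu),(T(X (x) TY),mu)]  of C^T; both composites with H_{X,Y} are
     identities because linear maps out of (tensor products of) free modules are determined
     by their restriction along the unit.
   (i) => (iii): the antipode s_{X,Y} is the transpose of  T(ev) H^{-1} (1 (x) eta_X);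
     naturality and the two axioms follow from the naturality of H^{-1}. *)

locale closed_bimonad =
  fixes C :: "('o, 'm) mcat" and L :: "('o, 'm) lclosed" and T :: "('o, 'm) bimon"
  assumes monoidal: "strict_monoidal C"
    and closed: "left_closed_data C L"
    and bimonad: "bimonad C T"
begin

abbreviation Ob where "Ob \<equiv> c_ob C"
abbreviation Hom where "Hom \<equiv> c_hom C"
abbreviation cmp (infixr "\<cdot>" 55) where "g \<cdot> f \<equiv> c_comp C g f"
abbreviation tms (infixr "\<otimes>" 60) where "f \<otimes> g \<equiv> c_tens_m C f g"
abbreviation tens_ob (infixr "\<odot>" 60) where "a \<odot> b \<equiv> c_tens_o C a b"
abbreviation idm where "idm \<equiv> c_id C"
abbreviation Tm where "Tm \<equiv> tmor T"
abbreviation To where "To \<equiv> tob T"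
abbreviation Mu where "Mu \<equiv> mu T"
abbreviation Eta where "Eta \<equiv> eta T"
abbreviation T2 where "T2 \<equiv> t2 T"
abbreviation Ih where "Ih \<equiv> ih L"
abbreviation Ihm where "Ihm \<equiv> ihm L"
abbreviation Ev where "Ev \<equiv> ev L"
abbreviation Coev where "Coev \<equiv> coev L"

text \<open>Arrows, with their domain and codomain (well defined since hom-sets are disjoint).\<close>

definition ar :: "'m \<Rightarrow> bool" where "ar f \<longleftrightarrow> (\<exists>a b. f \<in> Hom a b)"
definition dm :: "'m \<Rightarrow> 'o" where "dm f = (THE a. \<exists>b. f \<in> Hom a b)"
definition cd :: "'m \<Rightarrow> 'o" where "cd f = (THE b. \<exists>a. f \<in> Hom a b)"

lemma category: "category C"
  using monoidal unfolding strict_monoidal_def by (elim conjE)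

lemma hom_uniq: "f \<in> Hom a b \<Longrightarrow> f \<in> Hom a' b' \<Longrightarrow> a = a' \<and> b = b'"
  using category unfolding category_def by (elim conjE) blast

lemma hom_ob: "f \<in> Hom a b \<Longrightarrow> a \<in> Ob \<and> b \<in> Ob"
  using category unfolding category_def by (elim conjE) blast

lemma id_hom: "a \<in> Ob \<Longrightarrow> idm a \<in> Hom a a"
  using category unfolding category_def by (elim conjE) blast

lemma comp_hom: "f \<in> Hom a b \<Longrightarrow> g \<in> Hom b c \<Longrightarrow> g \<cdot> f \<in> Hom a c"
  using category unfolding category_def by (elim conjE) blast

lemma comp_id_hom: "f \<in> Hom a b \<Longrightarrow> f \<cdot> idm a = f \<and> idm b \<cdot> f = f"
  using category unfolding category_def by (elim conjE) blast

lemma comp_assoc_hom: "f \<in> Hom a b \<Longrightarrow> g \<in> Hom b c \<Longrightarrow> h \<in> Hom c d \<Longrightarrow>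
  (h \<cdot> g) \<cdot> f = h \<cdot> (g \<cdot> f)"
  using category unfolding category_def by (elim conjE) (metis (no_types))

lemma hom_iff: "f \<in> Hom a b \<longleftrightarrow> ar f \<and> dm f = a \<and> cd f = b"
proof
  assume "f \<in> Hom a b"
  then show "ar f \<and> dm f = a \<and> cd f = b"
    unfolding ar_def dm_def cd_def using hom_uniq by blast
next
  assume f: "ar f \<and> dm f = a \<and> cd f = b"
  then obtain a' b' where f': "f \<in> Hom a' b'" unfolding ar_def by blast
  then have "dm f = a'" "cd f = b'"
    unfolding dm_def cd_def using hom_uniq by blast+
  then show "f \<in> Hom a b" using f f' by simp
qed

lemma ar_hom: "ar f \<Longrightarrow> f \<in> Hom (dm f) (cd f)"
  using hom_iff by blast

lemma dm_ob[simp]: "ar f \<Longrightarrow> dm f \<in> Ob" and cd_ob[simp]: "ar f \<Longrightarrow> cd f \<in> Ob"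
  using hom_ob ar_hom by blast+

lemma ar_comp[simp]: "ar f \<Longrightarrow> ar g \<Longrightarrow> dm g = cd f \<Longrightarrow> ar (g \<cdot> f)"
  and dm_comp[simp]: "ar f \<Longrightarrow> ar g \<Longrightarrow> dm g = cd f \<Longrightarrow> dm (g \<cdot> f) = dm f"
  and cd_comp[simp]: "ar f \<Longrightarrow> ar g \<Longrightarrow> dm g = cd f \<Longrightarrow> cd (g \<cdot> f) = cd g"
  using comp_hom[OF ar_hom[of f], of g "cd g"] ar_hom[of g] hom_iff by auto

lemma ar_id[simp]: "a \<in> Ob \<Longrightarrow> ar (idm a)" and dm_id[simp]: "a \<in> Ob \<Longrightarrow> dm (idm a) = a"
  and cd_id[simp]: "a \<in> Ob \<Longrightarrow> cd (idm a) = a"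
  using id_hom hom_iff by blast+

lemma comp_id_r[simp]: "ar f \<Longrightarrow> dm f = a \<Longrightarrow> f \<cdot> idm a = f"
  and comp_id_l[simp]: "ar f \<Longrightarrow> cd f = a \<Longrightarrow> idm a \<cdot> f = f"
  using comp_id_hom ar_hom by blast+

lemma assoc[simp]: "ar f \<Longrightarrow> ar g \<Longrightarrow> ar h \<Longrightarrow> dm g = cd f \<Longrightarrow> dm h = cd g \<Longrightarrow>
   (h \<cdot> g) \<cdot> f = h \<cdot> (g \<cdot> f)"
  using comp_assoc_hom[OF ar_hom[of f] _ ar_hom[of h], of g] ar_hom[of g] by simp

lemma comp_reassoc: "a \<cdot> b = c \<Longrightarrow> ar a \<Longrightarrow> ar b \<Longrightarrow> dm a = cd b \<Longrightarrow> ar k \<Longrightarrow> dm b = cd k \<Longrightarrow>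
  a \<cdot> (b \<cdot> k) = c \<cdot> k"
  by (simp flip: assoc)

lemma comp_reassoc3: "a \<cdot> b \<cdot> c = d \<Longrightarrow> ar a \<Longrightarrow> ar b \<Longrightarrow> ar c \<Longrightarrow> dm a = cd b \<Longrightarrow> dm b = cd c \<Longrightarrow>
  ar k \<Longrightarrow> dm c = cd k \<Longrightarrow> a \<cdot> b \<cdot> c \<cdot> k = d \<cdot> k"
  by (simp flip: assoc)

lemma tens_ob[simp]: "a \<in> Ob \<Longrightarrow> b \<in> Ob \<Longrightarrow> a \<odot> b \<in> Ob"
  using monoidal unfolding strict_monoidal_def by (elim conjE) blast

lemma tens_hom: "f \<in> Hom a b \<Longrightarrow> g \<in> Hom c d \<Longrightarrow> f \<otimes> g \<in> Hom (a \<odot> c) (b \<odot> d)"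
  using monoidal unfolding strict_monoidal_def by (elim conjE) blast

lemma ar_tens[simp]: "ar f \<Longrightarrow> ar g \<Longrightarrow> ar (f \<otimes> g)"
  and dm_tens[simp]: "ar f \<Longrightarrow> ar g \<Longrightarrow> dm (f \<otimes> g) = dm f \<odot> dm g"
  and cd_tens[simp]: "ar f \<Longrightarrow> ar g \<Longrightarrow> cd (f \<otimes> g) = cd f \<odot> cd g"
  using tens_hom[OF ar_hom ar_hom] hom_iff by blast+

lemma tens_id[simp]: "a \<in> Ob \<Longrightarrow> b \<in> Ob \<Longrightarrow> idm a \<otimes> idm b = idm (a \<odot> b)"
  using monoidal unfolding strict_monoidal_def by (elim conjE) blast

lemma interchange_hom: "f \<in> Hom a b \<Longrightarrow> g \<in> Hom b c \<Longrightarrow> f' \<in> Hom a' b' \<Longrightarrow> g' \<in> Hom b' c' \<Longrightarrow>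
  (g \<otimes> g') \<cdot> (f \<otimes> f') = (g \<cdot> f) \<otimes> (g' \<cdot> f')"
  using monoidal unfolding strict_monoidal_def by (elim conjE) (metis (no_types))

lemma interchange: "ar f \<Longrightarrow> ar f' \<Longrightarrow> ar g \<Longrightarrow> ar g' \<Longrightarrow> dm g = cd f \<Longrightarrow> dm g' = cd f' \<Longrightarrow>
   (g \<otimes> g') \<cdot> (f \<otimes> f') = (g \<cdot> f) \<otimes> (g' \<cdot> f')"
  using interchange_hom[OF ar_hom[of f] _ ar_hom[of f'], of g _ g'] ar_hom[of g] ar_hom[of g'] by simp

lemma interchange_comp: "ar f \<Longrightarrow> ar f' \<Longrightarrow> ar g \<Longrightarrow> ar g' \<Longrightarrow> dm g = cd f \<Longrightarrow> dm g' = cd f' \<Longrightarrow>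
  ar k \<Longrightarrow> dm f \<odot> dm f' = cd k \<Longrightarrow> (g \<otimes> g') \<cdot> ((f \<otimes> f') \<cdot> k) = ((g \<cdot> f) \<otimes> (g' \<cdot> f')) \<cdot> k"
  by (simp flip: assoc add: interchange)

lemma closed_via: "left_closed_via C Ih Ev"
  using closed unfolding left_closed_data_def by (elim conjE)

lemma ihom_Ih: "X \<in> Ob \<Longrightarrow> Y \<in> Ob \<Longrightarrow> is_left_ihom C X Y (Ih X Y) (Ev X Y)"
  using closed_via unfolding left_closed_via_def by blast

lemma ih_ob[simp]: "X \<in> Ob \<Longrightarrow> Y \<in> Ob \<Longrightarrow> Ih X Y \<in> Ob"
  using ihom_Ih unfolding is_left_ihom_def by blast

lemma ar_ev[simp]: "X \<in> Ob \<Longrightarrow> Y \<in> Ob \<Longrightarrow> ar (Ev X Y)"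
  and dm_ev[simp]: "X \<in> Ob \<Longrightarrow> Y \<in> Ob \<Longrightarrow> dm (Ev X Y) = Ih X Y \<odot> X"
  and cd_ev[simp]: "X \<in> Ob \<Longrightarrow> Y \<in> Ob \<Longrightarrow> cd (Ev X Y) = Y"
  using ihom_Ih hom_iff unfolding is_left_ihom_def by blast+

lemma ev_univ: "X \<in> Ob \<Longrightarrow> Y \<in> Ob \<Longrightarrow> A \<in> Ob \<Longrightarrow> f \<in> Hom (A \<odot> X) Y \<Longrightarrow>
   \<exists>!g. g \<in> Hom A (Ih X Y) \<and> Ev X Y \<cdot> (g \<otimes> idm X) = f"
  using ihom_Ih unfolding is_left_ihom_def by blast

lemma ev_transpose: assumes "X \<in> Ob" "Y \<in> Ob" "A \<in> Ob" "ar f" "dm f = A \<odot> X" "cd f = Y"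
  obtains g where "ar g" "dm g = A" "cd g = Ih X Y" "Ev X Y \<cdot> (g \<otimes> idm X) = f"
proof -
  have "f \<in> Hom (A \<odot> X) Y" using assms hom_iff by blast
  then obtain g where "g \<in> Hom A (Ih X Y)" "Ev X Y \<cdot> (g \<otimes> idm X) = f"
    using ev_univ[OF assms(1-3)] by blast
  then show thesis using that hom_iff by blast
qed

lemma ev_uniq: assumes "X \<in> Ob" "Y \<in> Ob" "ar g" "ar g'" "dm g' = dm g" "cd g = Ih X Y" "cd g' = Ih X Y"
  and "Ev X Y \<cdot> (g \<otimes> idm X) = Ev X Y \<cdot> (g' \<otimes> idm X)"
  shows "g = g'"
proof -
  have "Ev X Y \<cdot> (g \<otimes> idm X) \<in> Hom (dm g \<odot> X) Y" using assms(1-3,6) hom_iff by simp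
  then have "\<exists>!x. x \<in> Hom (dm g) (Ih X Y) \<and> Ev X Y \<cdot> (x \<otimes> idm X) = Ev X Y \<cdot> (g \<otimes> idm X)"
    using ev_univ[OF assms(1,2)] assms(3) by simp
  moreover have "g \<in> Hom (dm g) (Ih X Y)" "g' \<in> Hom (dm g) (Ih X Y)" using assms(3-7) hom_iff by auto
  ultimately show ?thesis using assms(8) by metis
qed

lemma ihm_axiom: "f \<in> Hom X' X \<Longrightarrow> g \<in> Hom Y Y' \<Longrightarrow> Ihm f g \<in> Hom (Ih X Y) (Ih X' Y') \<and>
   Ev X' Y' \<cdot> (Ihm f g \<otimes> idm X') = g \<cdot> (Ev X Y \<cdot> (idm (Ih X Y) \<otimes> f))"
  using closed unfolding left_closed_data_def by (elim conjE) blast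

lemma ar_ihm[simp]: "ar f \<Longrightarrow> ar g \<Longrightarrow> ar (Ihm f g)"
  and dm_ihm[simp]: "ar f \<Longrightarrow> ar g \<Longrightarrow> dm (Ihm f g) = Ih (cd f) (dm g)"
  and cd_ihm[simp]: "ar f \<Longrightarrow> ar g \<Longrightarrow> cd (Ihm f g) = Ih (dm f) (cd g)"
  using ihm_axiom[OF ar_hom ar_hom] hom_iff by blast+

lemma ihm_ev: "ar f \<Longrightarrow> ar g \<Longrightarrow> dm f = X' \<Longrightarrow> cd g = Y' \<Longrightarrow> cd f = X \<Longrightarrow> dm g = Y \<Longrightarrow>
   Ev X' Y' \<cdot> (Ihm f g \<otimes> idm X') = g \<cdot> (Ev X Y \<cdot> (idm (Ih X Y) \<otimes> f))"
  using ihm_axiom[OF ar_hom ar_hom] by blast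

lemma ev_nat: assumes "X \<in> Ob" "ar g" "cd g = Y'" "dm g = Y"
  shows "Ev X Y' \<cdot> (Ihm (idm X) g \<otimes> idm X) = g \<cdot> Ev X Y"
  using ihm_ev[of "idm X" g X "cd g" X "dm g"] assms(1,2) unfolding assms(3,4)[symmetric] by simp

lemma ev_dinat: assumes "ar f" "Y \<in> Ob" "cd f = X" "dm f = X'"
  shows "Ev X Y \<cdot> (idm (Ih X Y) \<otimes> f) = Ev X' Y \<cdot> (Ihm f (idm Y) \<otimes> idm X')"
  using ihm_ev[of f "idm Y" "dm f" Y "cd f" Y] assms(1,2) unfolding assms(3,4)[symmetric] by simp

lemma ar_coev[simp]: "X \<in> Ob \<Longrightarrow> Y \<in> Ob \<Longrightarrow> ar (Coev X Y)"
  and dm_coev[simp]: "X \<in> Ob \<Longrightarrow> Y \<in> Ob \<Longrightarrow> dm (Coev X Y) = Y"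
  and cd_coev[simp]: "X \<in> Ob \<Longrightarrow> Y \<in> Ob \<Longrightarrow> cd (Coev X Y) = Ih X (Y \<odot> X)"
  using closed hom_iff unfolding left_closed_data_def by blast+

lemma coev_triangle: "X \<in> Ob \<Longrightarrow> Y \<in> Ob \<Longrightarrow> Ev X (Y \<odot> X) \<cdot> (Coev X Y \<otimes> idm X) = idm (Y \<odot> X)"
  using closed unfolding left_closed_data_def by blast

lemma coev_transpose: assumes X: "X \<in> Ob" and A: "A \<in> Ob" and g: "ar g" "dm g = A \<odot> X"
  shows "Ev X (cd g) \<cdot> ((Ihm (idm X) g \<cdot> Coev X A) \<otimes> idm X) = g"
proof -
  have "Ev X (cd g) \<cdot> ((Ihm (idm X) g \<cdot> Coev X A) \<otimes> idm X)
      = Ev X (cd g) \<cdot> (Ihm (idm X) g \<otimes> idm X) \<cdot> (Coev X A \<otimes> idm X)"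
    using assms by (simp add: interchange interchange_comp)
  also have "\<dots> = g \<cdot> Ev X (A \<odot> X) \<cdot> (Coev X A \<otimes> idm X)"
    using assms by (simp add: comp_reassoc[OF ev_nat])
  also have "\<dots> = g" using assms by (simp add: coev_triangle)
  finally show ?thesis .
qed

lemma ihm_id[simp]: "X \<in> Ob \<Longrightarrow> Y \<in> Ob \<Longrightarrow> Ihm (idm X) (idm Y) = idm (Ih X Y)"
  by (rule ev_uniq[of X Y]) (use ihm_ev[of "idm X" "idm Y"] in simp_all)

lemma ihm_comp: assumes "ar f" "ar g" "ar f'" "ar g'" "cd f = dm f'" "dm g = cd g'"
  shows "Ihm f g \<cdot> Ihm f' g' = Ihm (f' \<cdot> f) (g \<cdot> g')"
proof (rule ev_uniq[of "dm f" "cd g"])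
  have e1: "Ev (dm f) (cd g) \<cdot> (Ihm f g \<otimes> idm (dm f)) = g \<cdot> (Ev (cd f) (dm g) \<cdot> (idm (Ih (cd f) (dm g)) \<otimes> f))"
    using ihm_ev assms by simp
  have e2: "Ev (dm f') (cd g') \<cdot> (Ihm f' g' \<otimes> idm (dm f')) = g' \<cdot> (Ev (cd f') (dm g') \<cdot> (idm (Ih (cd f') (dm g')) \<otimes> f'))"
    using ihm_ev assms by simp
  have e3: "Ev (dm f) (cd g) \<cdot> (Ihm (f' \<cdot> f) (g \<cdot> g') \<otimes> idm (dm f)) = (g \<cdot> g') \<cdot> (Ev (cd f') (dm g') \<cdot> (idm (Ih (cd f') (dm g')) \<otimes> (f' \<cdot> f)))"
    using ihm_ev[of "f' \<cdot> f" "g \<cdot> g'"] assms by simp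
  have "Ev (dm f) (cd g) \<cdot> ((Ihm f g \<cdot> Ihm f' g') \<otimes> idm (dm f))
      = Ev (dm f) (cd g) \<cdot> ((Ihm f g \<otimes> idm (dm f)) \<cdot> (Ihm f' g' \<otimes> idm (dm f)))"
    using assms by (simp add: interchange interchange_comp)
  also have "\<dots> = g \<cdot> (Ev (cd f) (dm g) \<cdot> ((idm (Ih (cd f) (dm g)) \<otimes> f) \<cdot> (Ihm f' g' \<otimes> idm (dm f))))"
    using assms by (simp add: comp_reassoc[OF e1])
  also have "\<dots> = g \<cdot> (Ev (dm f') (cd g') \<cdot> ((Ihm f' g' \<otimes> idm (dm f')) \<cdot> (idm (Ih (cd f') (dm g')) \<otimes> f)))"
    using assms by (simp add: interchange interchange_comp)
  also have "\<dots> = g \<cdot> g' \<cdot> (Ev (cd f') (dm g') \<cdot> ((idm (Ih (cd f') (dm g')) \<otimes> f') \<cdot> (idm (Ih (cd f') (dm g')) \<otimes> f)))"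
    using assms by (simp add: comp_reassoc[OF e2])
  finally show "Ev (dm f) (cd g) \<cdot> ((Ihm f g \<cdot> Ihm f' g') \<otimes> idm (dm f)) = Ev (dm f) (cd g) \<cdot> (Ihm (f' \<cdot> f) (g \<cdot> g') \<otimes> idm (dm f))"
    using e3 assms by (simp add: interchange interchange_comp)
qed (use assms in simp_all)

lemma To_ob[simp]: "X \<in> Ob \<Longrightarrow> To X \<in> Ob"
  and Tm_id[simp]: "X \<in> Ob \<Longrightarrow> Tm (idm X) = idm (To X)"
  using bimonad unfolding bimonad_def by (elim conjE, simp)+

lemma Tm_hom: "f \<in> Hom a b \<Longrightarrow> Tm f \<in> Hom (To a) (To b)"
  using bimonad unfolding bimonad_def by (elim conjE) blast

lemma ar_Tm[simp]: "ar f \<Longrightarrow> ar (Tm f)" and dm_Tm[simp]: "ar f \<Longrightarrow> dm (Tm f) = To (dm f)"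
  and cd_Tm[simp]: "ar f \<Longrightarrow> cd (Tm f) = To (cd f)"
  using Tm_hom[OF ar_hom] hom_iff by blast+

lemma Tm_comp[simp]: "ar f \<Longrightarrow> ar g \<Longrightarrow> dm g = cd f \<Longrightarrow> Tm (g \<cdot> f) = Tm g \<cdot> Tm f"
proof -
  have "f \<in> Hom a b \<Longrightarrow> g \<in> Hom b c \<Longrightarrow> Tm (g \<cdot> f) = Tm g \<cdot> Tm f" for a b c f g
    using bimonad unfolding bimonad_def by (elim conjE) blast
  then show "ar f \<Longrightarrow> ar g \<Longrightarrow> dm g = cd f \<Longrightarrow> ?thesis" using ar_hom by metis
qed

lemma mu_eta_hom: "X \<in> Ob \<Longrightarrow> Mu X \<in> Hom (To (To X)) (To X) \<and> Eta X \<in> Hom X (To X)"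
  using bimonad unfolding bimonad_def by (elim conjE) blast

lemma ar_mu[simp]: "X \<in> Ob \<Longrightarrow> ar (Mu X)" and dm_mu[simp]: "X \<in> Ob \<Longrightarrow> dm (Mu X) = To (To X)"
  and cd_mu[simp]: "X \<in> Ob \<Longrightarrow> cd (Mu X) = To X"
  and ar_eta[simp]: "X \<in> Ob \<Longrightarrow> ar (Eta X)" and dm_eta[simp]: "X \<in> Ob \<Longrightarrow> dm (Eta X) = X"
  and cd_eta[simp]: "X \<in> Ob \<Longrightarrow> cd (Eta X) = To X"
  using mu_eta_hom hom_iff by blast+

lemma mu_eta_nat_hom: "f \<in> Hom a b \<Longrightarrow> Mu b \<cdot> Tm (Tm f) = Tm f \<cdot> Mu a \<and> Eta b \<cdot> f = Tm f \<cdot> Eta a"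
  using bimonad unfolding bimonad_def by (elim conjE) blast

lemma mu_nat: "ar f \<Longrightarrow> cd f = b \<Longrightarrow> dm f = a \<Longrightarrow> Mu b \<cdot> Tm (Tm f) = Tm f \<cdot> Mu a"
  using mu_eta_nat_hom ar_hom by blast

lemma eta_nat: "ar f \<Longrightarrow> cd f = b \<Longrightarrow> dm f = a \<Longrightarrow> Eta b \<cdot> f = Tm f \<cdot> Eta a"
  using mu_eta_nat_hom ar_hom by blast

lemma mu_assoc: "X \<in> Ob \<Longrightarrow> Mu X \<cdot> Tm (Mu X) = Mu X \<cdot> Mu (To X)"
  and mu_eta1[simp]: "X \<in> Ob \<Longrightarrow> Mu X \<cdot> Eta (To X) = idm (To X)"
  and mu_eta2[simp]: "X \<in> Ob \<Longrightarrow> Mu X \<cdot> Tm (Eta X) = idm (To X)"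
  using bimonad unfolding bimonad_def by (elim conjE, simp)+

lemma t2_hom: "X \<in> Ob \<Longrightarrow> Y \<in> Ob \<Longrightarrow> T2 X Y \<in> Hom (To (X \<odot> Y)) (To X \<odot> To Y)"
  using bimonad unfolding bimonad_def by (elim conjE) blast

lemma ar_t2[simp]: "X \<in> Ob \<Longrightarrow> Y \<in> Ob \<Longrightarrow> ar (T2 X Y)"
  and dm_t2[simp]: "X \<in> Ob \<Longrightarrow> Y \<in> Ob \<Longrightarrow> dm (T2 X Y) = To (X \<odot> Y)"
  and cd_t2[simp]: "X \<in> Ob \<Longrightarrow> Y \<in> Ob \<Longrightarrow> cd (T2 X Y) = To X \<odot> To Y"
  using t2_hom hom_iff by blast+

lemma t2_nat_hom: "f \<in> Hom a b \<Longrightarrow> g \<in> Hom c d \<Longrightarrow>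
  T2 b d \<cdot> Tm (f \<otimes> g) = (Tm f \<otimes> Tm g) \<cdot> T2 a c"
  using bimonad unfolding bimonad_def by (elim conjE) (metis (no_types))

lemma t2_nat: "ar f \<Longrightarrow> ar g \<Longrightarrow> cd f = b \<Longrightarrow> cd g = d \<Longrightarrow> dm f = a \<Longrightarrow> dm g = c \<Longrightarrow>
  T2 b d \<cdot> Tm (f \<otimes> g) = (Tm f \<otimes> Tm g) \<cdot> T2 a c"
  using t2_nat_hom ar_hom by blast

lemma t2_mu: "X \<in> Ob \<Longrightarrow> Y \<in> Ob \<Longrightarrow>
    T2 X Y \<cdot> Mu (X \<odot> Y) = (Mu X \<otimes> Mu Y) \<cdot> (T2 (To X) (To Y) \<cdot> Tm (T2 X Y))"
  and t2_eta: "X \<in> Ob \<Longrightarrow> Y \<in> Ob \<Longrightarrow> T2 X Y \<cdot> Eta (X \<odot> Y) = Eta X \<otimes> Eta Y"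
  using bimonad unfolding bimonad_def by (elim conjE, simp)+

lemma split_epi_cancel:
  assumes "ar k" "ar \<Omega>" "cd \<Omega> = dm k" "k \<cdot> \<Omega> = idm (cd k)"
    and "ar \<psi>1" "ar \<psi>2" "dm \<psi>1 = cd k" "dm \<psi>2 = cd k" "\<psi>1 \<cdot> k = \<psi>2 \<cdot> k"
  shows "\<psi>1 = \<psi>2"
proof -
  have "\<psi>1 = (\<psi>1 \<cdot> k) \<cdot> \<Omega>" using assms(1-5,7) by simp
  also have "\<dots> = (\<psi>2 \<cdot> k) \<cdot> \<Omega>" by (simp only: assms(9))
  also have "\<dots> = \<psi>2" using assms(1-4,6,8) by simp
  finally show ?thesis .
qed

definition is_mod :: "'o \<Rightarrow> 'm \<Rightarrow> bool" where "is_mod M r \<longleftrightarrow> (M, r) \<in> em_ob C T"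

lemma em_ob_iff: "(M, r) \<in> em_ob C T \<longleftrightarrow>
   M \<in> Ob \<and> ar r \<and> dm r = To M \<and> cd r = M \<and> r \<cdot> Tm r = r \<cdot> Mu M \<and> r \<cdot> Eta M = idm M"
  unfolding em_ob_def using hom_iff by auto

lemma is_modD: assumes "is_mod M r"
  shows "M \<in> Ob" "ar r" "dm r = To M" "cd r = M" "r \<cdot> Tm r = r \<cdot> Mu M" "r \<cdot> Eta M = idm M"
  using assms unfolding is_mod_def em_ob_iff by auto

lemma EM_ob[simp]: "c_ob (EM C T) = em_ob C T" unfolding EM_def by simp
lemma EM_comp[simp]: "c_comp (EM C T) = c_comp C" unfolding EM_def by simp
lemma EM_tm[simp]: "c_tens_m (EM C T) = c_tens_m C" unfolding EM_def by simp
lemma EM_id[simp]: "c_id (EM C T) (M, r) = idm M" unfolding EM_def by simp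
lemma EM_to[simp]: "c_tens_o (EM C T) (M, r) (N, s) = (M \<odot> N, (r \<otimes> s) \<cdot> T2 M N)"
  unfolding EM_def by simp
lemma EM_hom[simp]: "f \<in> c_hom (EM C T) (M, r) (N, s) \<longleftrightarrow> (M, r) \<in> em_ob C T \<and> (N, s) \<in> em_ob C T \<and>
   ar f \<and> dm f = M \<and> cd f = N \<and> s \<cdot> Tm f = f \<cdot> r"
  unfolding EM_def using hom_iff by auto

lemma free_mod: "X \<in> Ob \<Longrightarrow> is_mod (To X) (Mu X)"
  unfolding is_mod_def em_ob_iff by (simp add: mu_assoc)

lemma free_mod_uniq: assumes mN: "is_mod N t" and X: "X \<in> Ob"
  and u: "ar u1" "ar u2" "dm u1 = To X" "dm u2 = To X" "cd u1 = N" "cd u2 = N"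
  and l: "t \<cdot> Tm u1 = u1 \<cdot> Mu X" "t \<cdot> Tm u2 = u2 \<cdot> Mu X"
  and e: "u1 \<cdot> Eta X = u2 \<cdot> Eta X"
  shows "u1 = u2"
proof -
  note m = is_modD[OF mN]
  have "u1 = u1 \<cdot> Mu X \<cdot> Tm (Eta X)" using u X by simp
  also have "\<dots> = t \<cdot> Tm (u1 \<cdot> Eta X)"
    using u X m by (simp del: mu_eta2 add: comp_reassoc[OF l(1)[symmetric]])
  also have "\<dots> = t \<cdot> Tm (u2 \<cdot> Eta X)" using e by simp
  also have "\<dots> = u2 \<cdot> Mu X \<cdot> Tm (Eta X)"
    using u X m by (simp del: mu_eta2 add: comp_reassoc[OF l(2)[symmetric]])
  also have "\<dots> = u2" using u X by simp
  finally show ?thesis .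
qed

lemma free_extension: assumes m: "is_mod I a" and w: "ar w" "dm w = X" "cd w = I"
  shows "a \<cdot> Tm (a \<cdot> Tm w) = (a \<cdot> Tm w) \<cdot> Mu X" "(a \<cdot> Tm w) \<cdot> Eta X = w"
proof -
  note mi = is_modD[OF m]
  have X: "X \<in> Ob" using w dm_ob by metis
  have "a \<cdot> Tm (a \<cdot> Tm w) = a \<cdot> Mu I \<cdot> Tm (Tm w)" using w mi by (simp add: comp_reassoc[OF mi(5)])
  also have "\<dots> = (a \<cdot> Tm w) \<cdot> Mu X" using w mi X by (simp add: comp_reassoc[OF mu_nat] mu_nat)
  finally show "a \<cdot> Tm (a \<cdot> Tm w) = (a \<cdot> Tm w) \<cdot> Mu X" .
  show "(a \<cdot> Tm w) \<cdot> Eta X = w"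
    using w mi X by (simp add: comp_reassoc[OF mi(6)] flip: eta_nat[of w I X])
qed

lemma tensor_mod: assumes "is_mod M r" "is_mod N s" shows "is_mod (M \<odot> N) ((r \<otimes> s) \<cdot> T2 M N)"
proof -
  note m = is_modD[OF assms(1)] is_modD[OF assms(2)]
  have "(r \<otimes> s) \<cdot> T2 M N \<cdot> Tm ((r \<otimes> s) \<cdot> T2 M N) = (r \<otimes> s) \<cdot> (Tm r \<otimes> Tm s) \<cdot> T2 (To M) (To N) \<cdot> Tm (T2 M N)"
    using m by (simp add: comp_reassoc[OF t2_nat])
  also have "\<dots> = ((r \<cdot> Mu M) \<otimes> (s \<cdot> Mu N)) \<cdot> T2 (To M) (To N) \<cdot> Tm (T2 M N)"
    using m by (simp add: interchange interchange_comp)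
  also have "\<dots> = (r \<otimes> s) \<cdot> T2 M N \<cdot> Mu (M \<odot> N)"
    using m by (simp add: interchange interchange_comp t2_mu)
  finally have "(r \<otimes> s) \<cdot> T2 M N \<cdot> Tm ((r \<otimes> s) \<cdot> T2 M N) = (r \<otimes> s) \<cdot> T2 M N \<cdot> Mu (M \<odot> N)" .
  moreover have "((r \<otimes> s) \<cdot> T2 M N) \<cdot> Eta (M \<odot> N) = idm (M \<odot> N)"
    using m by (simp add: t2_eta interchange)
  ultimately show ?thesis unfolding is_mod_def em_ob_iff using m by simp
qed

definition fusion :: "'o \<Rightarrow> 'o \<Rightarrow> 'm" where "fusion Y X = (idm (To Y) \<otimes> Mu X) \<cdot> T2 Y (To X)"

lemma fusion_ar[simp]: "Y \<in> Ob \<Longrightarrow> X \<in> Ob \<Longrightarrow> ar (fusion Y X)"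
  and fusion_dm[simp]: "Y \<in> Ob \<Longrightarrow> X \<in> Ob \<Longrightarrow> dm (fusion Y X) = To (Y \<odot> To X)"
  and fusion_cd[simp]: "Y \<in> Ob \<Longrightarrow> X \<in> Ob \<Longrightarrow> cd (fusion Y X) = To Y \<odot> To X"
  unfolding fusion_def by simp_all

lemma fusion_linear: assumes "X \<in> Ob" "Y \<in> Ob"
  shows "(Mu X \<otimes> Mu Y) \<cdot> T2 (To X) (To Y) \<cdot> Tm (fusion X Y) = fusion X Y \<cdot> Mu (X \<odot> To Y)"
proof -
  have "(Mu X \<otimes> Mu Y) \<cdot> T2 (To X) (To Y) \<cdot> Tm (fusion X Y)
      = (Mu X \<otimes> (Mu Y \<cdot> Tm (Mu Y))) \<cdot> T2 (To X) (To (To Y)) \<cdot> Tm (T2 X (To Y))"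
    unfolding fusion_def using assms by (simp add: comp_reassoc[OF t2_nat] interchange interchange_comp)
  also have "\<dots> = (idm (To X) \<otimes> Mu Y) \<cdot> (Mu X \<otimes> Mu (To Y)) \<cdot> T2 (To X) (To (To Y)) \<cdot> Tm (T2 X (To Y))"
    using assms by (simp add: interchange interchange_comp mu_assoc)
  also have "\<dots> = fusion X Y \<cdot> Mu (X \<odot> To Y)"
    unfolding fusion_def using assms by (simp add: t2_mu comp_reassoc[OF t2_mu])
  finally show ?thesis .
qed

lemma fusion_eta: assumes "X \<in> Ob" "Y \<in> Ob"
  shows "fusion X Y \<cdot> Eta (X \<odot> To Y) = Eta X \<otimes> idm (To Y)"
  unfolding fusion_def using assms by (simp add: t2_eta comp_reassoc[OF t2_eta] interchange)

text \<open>The weak invertibility of the fusion operators which an antipode provides: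
  each \<open>1 \<otimes> \<eta>\<^sub>X\<close> factors through \<open>H\<^sup>l\<^sub>Y\<^sub>,\<^sub>X\<close>.\<close>

definition fusion_sections :: bool where
  "fusion_sections \<longleftrightarrow> (\<forall>Y\<in>Ob. \<forall>X\<in>Ob. \<exists>h. ar h \<and> dm h = To Y \<odot> X \<and> cd h = To (Y \<odot> To X) \<and>
     fusion Y X \<cdot> h = idm (To Y) \<otimes> Eta X)"

definition partial_action :: "'o \<Rightarrow> 'o \<Rightarrow> 'm \<Rightarrow> 'm" where
  "partial_action B M r = (idm (To B) \<otimes> r) \<cdot> T2 B M"

lemma partial_action_ar[simp]: "B \<in> Ob \<Longrightarrow> is_mod M r \<Longrightarrow> ar (partial_action B M r)"
  and partial_action_dm[simp]: "B \<in> Ob \<Longrightarrow> is_mod M r \<Longrightarrow> dm (partial_action B M r) = To (B \<odot> M)"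
  and partial_action_cd[simp]: "B \<in> Ob \<Longrightarrow> is_mod M r \<Longrightarrow> cd (partial_action B M r) = To B \<odot> M"
  unfolding partial_action_def using is_modD by simp_all

lemma partial_action_section: assumes P: fusion_sections and B: "B \<in> Ob" and m: "is_mod M r"
  obtains \<Omega> where "ar \<Omega>" "dm \<Omega> = To B \<odot> M" "cd \<Omega> = To (B \<odot> M)"
    "partial_action B M r \<cdot> \<Omega> = idm (To B \<odot> M)"
proof -
  note mm = is_modD[OF m]
  obtain h where h: "ar h" "dm h = To B \<odot> M" "cd h = To (B \<odot> To M)" "fusion B M \<cdot> h = idm (To B) \<otimes> Eta M"
    using P B mm unfolding fusion_sections_def by blast
  have "partial_action B M r \<cdot> Tm (idm B \<otimes> r) \<cdot> h = (idm (To B) \<otimes> (r \<cdot> Tm r)) \<cdot> T2 B (To M) \<cdot> h"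
    unfolding partial_action_def using h mm B
    by (simp add: comp_reassoc[OF t2_nat] interchange interchange_comp)
  also have "\<dots> = (idm (To B) \<otimes> r) \<cdot> fusion B M \<cdot> h"
    unfolding fusion_def using h mm B by (simp add: interchange interchange_comp)
  also have "\<dots> = idm (To B \<odot> M)"
    using h mm B by (simp add: interchange interchange_comp)
  finally show thesis using that[of "Tm (idm B \<otimes> r) \<cdot> h"] h mm B by simp
qed

lemma partial_action_cancel: assumes P: fusion_sections and B: "B \<in> Ob" and m: "is_mod M r"
  and a: "ar \<psi>1" "ar \<psi>2" "dm \<psi>1 = To B \<odot> M" "dm \<psi>2 = To B \<odot> M"
  and e: "\<psi>1 \<cdot> partial_action B M r = \<psi>2 \<cdot> partial_action B M r"
  shows "\<psi>1 = \<psi>2"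
proof -
  obtain \<Omega> where "ar \<Omega>" "dm \<Omega> = To B \<odot> M" "cd \<Omega> = To (B \<odot> M)"
    "partial_action B M r \<cdot> \<Omega> = idm (To B \<odot> M)"
    using partial_action_section[OF P B m] .
  then show ?thesis
    by (intro split_epi_cancel[of "partial_action B M r" \<Omega> \<psi>1 \<psi>2]) (use a e B m in simp_all)
qed

lemma partial_action_cancel_T: assumes P: fusion_sections and B: "B \<in> Ob" and m: "is_mod M r"
  and a: "ar \<psi>1" "ar \<psi>2" "dm \<psi>1 = To (To B \<odot> M)" "dm \<psi>2 = To (To B \<odot> M)"
  and e: "\<psi>1 \<cdot> Tm (partial_action B M r) = \<psi>2 \<cdot> Tm (partial_action B M r)"
  shows "\<psi>1 = \<psi>2"
proof -
  obtain \<Omega> where o: "ar \<Omega>" "dm \<Omega> = To B \<odot> M" "cd \<Omega> = To (B \<odot> M)"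
    "partial_action B M r \<cdot> \<Omega> = idm (To B \<odot> M)"
    using partial_action_section[OF P B m] .
  then have "Tm (partial_action B M r) \<cdot> Tm \<Omega> = idm (To (To B \<odot> M))"
    using B m is_modD[OF m] by (simp flip: Tm_comp)
  with o show ?thesis
    by (intro split_epi_cancel[of "Tm (partial_action B M r)" "Tm \<Omega>" \<psi>1 \<psi>2])
      (use a e B m is_modD[OF m] in simp_all)
qed

text \<open>(iii) \<open>\<Longrightarrow>\<close> (ii): a left antipode \<open>s\<close> turns \<open>[M,N]\<^sup>l\<close> into a module, and this gives
  internal Homs of \<open>C\<^sup>T\<close> preserved by the forgetful functor.\<close>

context fixes s assumes antipode: "left_antipode C L T s"
begin

lemma antipode_hom: "X \<in> Ob \<Longrightarrow> Y \<in> Ob \<Longrightarrow> s X Y \<in> Hom (To (Ih (To X) Y)) (Ih X (To Y))"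
  using antipode unfolding left_antipode_def by blast

lemma antipode_ar[simp]: "X \<in> Ob \<Longrightarrow> Y \<in> Ob \<Longrightarrow> ar (s X Y)"
  and antipode_dm[simp]: "X \<in> Ob \<Longrightarrow> Y \<in> Ob \<Longrightarrow> dm (s X Y) = To (Ih (To X) Y)"
  and antipode_cd[simp]: "X \<in> Ob \<Longrightarrow> Y \<in> Ob \<Longrightarrow> cd (s X Y) = Ih X (To Y)"
  using antipode_hom hom_iff by blast+

lemma antipode_nat: "ar f \<Longrightarrow> ar g \<Longrightarrow> dm f = X' \<Longrightarrow> cd f = X \<Longrightarrow> dm g = Y \<Longrightarrow> cd g = Y' \<Longrightarrow>
   s X' Y' \<cdot> Tm (Ihm (Tm f) g) = Ihm f (Tm g) \<cdot> s X Y"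
proof -
  have "f \<in> Hom X' X \<Longrightarrow> g \<in> Hom Y Y' \<Longrightarrow> s X' Y' \<cdot> Tm (Ihm (Tm f) g) = Ihm f (Tm g) \<cdot> s X Y"
    for X X' Y Y' f g
    using antipode unfolding left_antipode_def by (elim conjE) blast
  then show "ar f \<Longrightarrow> ar g \<Longrightarrow> dm f = X' \<Longrightarrow> cd f = X \<Longrightarrow> dm g = Y \<Longrightarrow> cd g = Y' \<Longrightarrow> ?thesis"
    using ar_hom by blast
qed

lemma antipode_ax1: "X \<in> Ob \<Longrightarrow> Y \<in> Ob \<Longrightarrow> Tm (Ev X Y \<cdot> (Ihm (Eta X) (idm Y) \<otimes> idm X))
    = Ev (To X) (To Y) \<cdot> ((s (To X) Y \<cdot> Tm (Ihm (Mu X) (idm Y))) \<otimes> idm (To X)) \<cdot> T2 (Ih (To X) Y) X"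
  using antipode unfolding left_antipode_def by blast

lemma antipode_ax2: "X \<in> Ob \<Longrightarrow> Y \<in> Ob \<Longrightarrow> Ihm (idm X) (idm (To Y) \<otimes> Eta X) \<cdot> Coev X (To Y)
    = Ihm (idm X) (fusion Y X) \<cdot> s X (Y \<odot> To X) \<cdot> Tm (Coev (To X) Y)"
  using antipode unfolding left_antipode_def fusion_def by blast

text \<open>Axiom (2) says that the transpose of \<open>s \<circ> T(coev)\<close> is a section of the fusion operator
  along \<open>1 \<otimes> \<eta>\<close>.\<close>

lemma antipode_fusion_sections: "fusion_sections"
  unfolding fusion_sections_def
proof (intro ballI)
  fix Y X assume YX: "Y \<in> Ob" "X \<in> Ob"
  define \<sigma> where "\<sigma> = s X (Y \<odot> To X) \<cdot> Tm (Coev (To X) Y)"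
  have \<sigma>: "ar \<sigma>" "dm \<sigma> = To Y" "cd \<sigma> = Ih X (To (Y \<odot> To X))" unfolding \<sigma>_def using YX by simp_all
  define h where "h = Ev X (To (Y \<odot> To X)) \<cdot> (\<sigma> \<otimes> idm X)"
  have "fusion Y X \<cdot> h = Ev X (To Y \<odot> To X) \<cdot> (Ihm (idm X) (fusion Y X) \<otimes> idm X) \<cdot> (\<sigma> \<otimes> idm X)"
    unfolding h_def using YX \<sigma> by (simp add: comp_reassoc[OF ev_nat])
  also have "\<dots> = Ev X (To Y \<odot> To X) \<cdot> ((Ihm (idm X) (fusion Y X) \<cdot> \<sigma>) \<otimes> idm X)"
    using YX \<sigma> by (simp add: interchange interchange_comp)
  also have "\<dots> = Ev X (To Y \<odot> To X) \<cdot> ((Ihm (idm X) (idm (To Y) \<otimes> Eta X) \<cdot> Coev X (To Y)) \<otimes> idm X)"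
    using YX by (simp add: \<sigma>_def antipode_ax2)
  also have "\<dots> = idm (To Y) \<otimes> Eta X"
    using coev_transpose[of X "To Y" "idm (To Y) \<otimes> Eta X"] YX by simp
  finally show "\<exists>h. ar h \<and> dm h = To Y \<odot> X \<and> cd h = To (Y \<odot> To X) \<and> fusion Y X \<cdot> h = idm (To Y) \<otimes> Eta X"
    using YX \<sigma> by (intro exI[of _ h]) (simp add: h_def)
qed

abbreviation act where "act M r N t \<equiv> ihom_action C L T s M r N t"

lemma act_eq: "act M r N t = Ihm (idm M) t \<cdot> s M N \<cdot> Tm (Ihm r (idm N))"
  unfolding ihom_action_def by simp

lemma act_typ: assumes "is_mod M r" "is_mod N t"
  shows "ar (act M r N t)" "dm (act M r N t) = To (Ih M N)" "cd (act M r N t) = Ih M N"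
  using is_modD[OF assms(1)] is_modD[OF assms(2)] unfolding act_eq by simp_all

text \<open>Naturality of \<open>s\<close> in its first argument at \<open>r : TM \<rightarrow> M\<close>, combined with associativity of \<open>r\<close>.\<close>

lemma antipode_action_twist: assumes m: "is_mod M r" and N: "N \<in> Ob"
  shows "Ihm r (idm (To N)) \<cdot> s M N \<cdot> Tm (Ihm r (idm N))
       = s (To M) N \<cdot> Tm (Ihm (Mu M) (idm N)) \<cdot> Tm (Ihm r (idm N))"
proof -
  note mm = is_modD[OF m]
  have "Ihm (Tm r) (idm N) \<cdot> Ihm r (idm N) = Ihm (Mu M) (idm N) \<cdot> Ihm r (idm N)"
    using mm N by (simp add: ihm_comp)
  then have "Tm (Ihm (Tm r) (idm N)) \<cdot> Tm (Ihm r (idm N)) = Tm (Ihm (Mu M) (idm N)) \<cdot> Tm (Ihm r (idm N))"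
    using mm N by (simp flip: Tm_comp)
  moreover have "Ihm r (idm (To N)) \<cdot> s M N = s (To M) N \<cdot> Tm (Ihm (Tm r) (idm N))"
    using antipode_nat[of r "idm N" "To M" M N N] mm N by simp
  ultimately show ?thesis using mm N by (simp add: comp_reassoc[of "Ihm r (idm (To N))"])
qed

text \<open>Evaluation \<open>([M,N]\<^sup>l, act) \<otimes> (M, r) \<rightarrow> (N, t)\<close> is \<open>T\<close>-linear; this is where axiom (1) is used.\<close>

lemma ev_linear: assumes m1: "is_mod M r" and m2: "is_mod N t"
  shows "Ev M N \<cdot> (act M r N t \<otimes> r) \<cdot> T2 (Ih M N) M = t \<cdot> Tm (Ev M N)"
proof -
  note m = m1 m2 is_modD[OF m1] is_modD[OF m2]
  define \<kappa> where "\<kappa> = s (To M) N \<cdot> Tm (Ihm (Mu M) (idm N))"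
  have \<kappa>: "ar \<kappa>" "dm \<kappa> = To (Ih (To M) N)" "cd \<kappa> = Ih (To M) (To N)" unfolding \<kappa>_def using m by simp_all
  have F: "Ev M N \<cdot> (Ihm (Eta M) (idm N) \<otimes> idm M) \<cdot> (Ihm r (idm N) \<otimes> idm M) = Ev M N"
    using m by (simp add: interchange interchange_comp ihm_comp)
  have "Ev M N \<cdot> (act M r N t \<otimes> r) \<cdot> T2 (Ih M N) M
      = Ev M N \<cdot> (Ihm (idm M) t \<otimes> idm M) \<cdot> ((s M N \<cdot> Tm (Ihm r (idm N))) \<otimes> r) \<cdot> T2 (Ih M N) M"
    unfolding act_eq using m by (simp add: interchange interchange_comp)
  also have "\<dots> = t \<cdot> Ev M (To N) \<cdot> ((s M N \<cdot> Tm (Ihm r (idm N))) \<otimes> r) \<cdot> T2 (Ih M N) M"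
    using m by (simp add: comp_reassoc[OF ev_nat])
  also have "\<dots> = t \<cdot> Ev M (To N) \<cdot> (idm (Ih M (To N)) \<otimes> r) \<cdot> ((s M N \<cdot> Tm (Ihm r (idm N))) \<otimes> idm (To M)) \<cdot> T2 (Ih M N) M"
    using m by (simp add: interchange interchange_comp)
  also have "\<dots> = t \<cdot> Ev (To M) (To N) \<cdot> (Ihm r (idm (To N)) \<otimes> idm (To M)) \<cdot> ((s M N \<cdot> Tm (Ihm r (idm N))) \<otimes> idm (To M)) \<cdot> T2 (Ih M N) M"
    using m by (simp add: comp_reassoc[OF ev_dinat])
  also have "\<dots> = t \<cdot> Ev (To M) (To N) \<cdot> ((Ihm r (idm (To N)) \<cdot> s M N \<cdot> Tm (Ihm r (idm N))) \<otimes> idm (To M)) \<cdot> T2 (Ih M N) M"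
    using m by (simp add: interchange interchange_comp)
  also have "\<dots> = t \<cdot> Ev (To M) (To N) \<cdot> ((\<kappa> \<cdot> Tm (Ihm r (idm N))) \<otimes> idm (To M)) \<cdot> T2 (Ih M N) M"
    using m \<kappa> by (simp add: antipode_action_twist \<kappa>_def)
  also have "\<dots> = t \<cdot> Ev (To M) (To N) \<cdot> (\<kappa> \<otimes> idm (To M)) \<cdot> (Tm (Ihm r (idm N)) \<otimes> idm (To M)) \<cdot> T2 (Ih M N) M"
    using m \<kappa> by (simp add: interchange interchange_comp)
  also have "\<dots> = t \<cdot> Ev (To M) (To N) \<cdot> (\<kappa> \<otimes> idm (To M)) \<cdot> T2 (Ih (To M) N) M \<cdot> Tm (Ihm r (idm N) \<otimes> idm M)"
    using m \<kappa> by (simp add: t2_nat comp_reassoc[OF t2_nat])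
  also have "\<dots> = t \<cdot> Tm (Ev M N \<cdot> (Ihm (Eta M) (idm N) \<otimes> idm M)) \<cdot> Tm (Ihm r (idm N) \<otimes> idm M)"
    using m \<kappa> by (simp add: \<kappa>_def comp_reassoc3[OF antipode_ax1[symmetric]])
  also have "\<dots> = t \<cdot> Tm (Ev M N)"
    using m by (simp add: F flip: Tm_comp)
  finally show ?thesis .
qed

lemma act_unit: assumes m1: "is_mod M r" and m2: "is_mod N t"
  shows "act M r N t \<cdot> Eta (Ih M N) = idm (Ih M N)"
proof (rule ev_uniq[of M N])
  note m = m1 m2 is_modD[OF m1] is_modD[OF m2] act_typ[OF m1 m2]
  have "Ev M N \<cdot> ((act M r N t \<cdot> Eta (Ih M N)) \<otimes> idm M)
      = Ev M N \<cdot> (act M r N t \<otimes> r) \<cdot> T2 (Ih M N) M \<cdot> Eta (Ih M N \<odot> M)"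
    using m by (simp add: interchange interchange_comp t2_eta comp_reassoc[OF t2_eta])
  also have "\<dots> = t \<cdot> Eta N \<cdot> Ev M N"
    using m by (simp add: comp_reassoc3[OF ev_linear[OF m1 m2]] comp_reassoc[OF eta_nat] eta_nat)
  also have "\<dots> = Ev M N \<cdot> (idm (Ih M N) \<otimes> idm M)"
    using m by (simp add: comp_reassoc[OF is_modD(6)[OF m2]])
  finally show "Ev M N \<cdot> ((act M r N t \<cdot> Eta (Ih M N)) \<otimes> idm M) = Ev M N \<cdot> (idm (Ih M N) \<otimes> idm M)" .
qed (use m1 m2 is_modD[OF m1] is_modD[OF m2] act_typ[OF m1 m2] in simp_all)

text \<open>Transposes of linear maps are linear.  The proof cancels the partial action,
  which is possible thanks to the sections of the fusion operators.\<close>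

lemma act_transpose_linear: assumes m1: "is_mod M r" and m2: "is_mod N t" and m3: "is_mod B p"
  and f: "ar f" "dm f = B \<odot> M" "cd f = N" "t \<cdot> Tm f = f \<cdot> (p \<otimes> r) \<cdot> T2 B M"
  and g: "ar g" "dm g = B" "cd g = Ih M N" "Ev M N \<cdot> (g \<otimes> idm M) = f"
  shows "act M r N t \<cdot> Tm g = g \<cdot> p"
proof -
  note m = m1 m2 is_modD[OF m1] is_modD[OF m2] is_modD[OF m3] act_typ[OF m1 m2]
  define a where "a = act M r N t"
  have ma: "ar a" "dm a = To (Ih M N)" "cd a = Ih M N" using m unfolding a_def by simp_all
  have "Ev M N \<cdot> ((a \<cdot> Tm g) \<otimes> idm M) \<cdot> partial_action B M r
      = Ev M N \<cdot> (a \<otimes> r) \<cdot> (Tm g \<otimes> Tm (idm M)) \<cdot> T2 B M"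
    unfolding partial_action_def using m ma g by (simp add: interchange interchange_comp)
  also have "\<dots> = Ev M N \<cdot> (a \<otimes> r) \<cdot> T2 (Ih M N) M \<cdot> Tm (g \<otimes> idm M)"
    using m ma g by (simp add: t2_nat comp_reassoc[OF t2_nat])
  also have "\<dots> = t \<cdot> Tm f"
    unfolding a_def g(4)[symmetric] using m ma g(1-3) by (simp add: comp_reassoc3[OF ev_linear[OF m1 m2]])
  also have "\<dots> = Ev M N \<cdot> (g \<otimes> idm M) \<cdot> (p \<otimes> r) \<cdot> T2 B M"
    using f(4) g(1-3) m by (simp add: comp_reassoc[OF g(4)])
  also have "\<dots> = Ev M N \<cdot> ((g \<cdot> p) \<otimes> idm M) \<cdot> partial_action B M r"
    unfolding partial_action_def using m ma g by (simp add: interchange interchange_comp)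
  finally have F: "Ev M N \<cdot> ((a \<cdot> Tm g) \<otimes> idm M) \<cdot> partial_action B M r
      = Ev M N \<cdot> ((g \<cdot> p) \<otimes> idm M) \<cdot> partial_action B M r" .
  have "Ev M N \<cdot> ((g \<cdot> p) \<otimes> idm M) = Ev M N \<cdot> ((a \<cdot> Tm g) \<otimes> idm M)"
    by (rule partial_action_cancel[OF antipode_fusion_sections is_modD(1)[OF m3] m1])
      (use F[symmetric] m ma g in simp_all)
  then have "g \<cdot> p = a \<cdot> Tm g"
    by (rule ev_uniq[of M N, rotated -1]) (use m ma g in simp_all)
  then show ?thesis unfolding a_def by simp
qed

lemma ev_act_linear: assumes m1: "is_mod M r" and m2: "is_mod N t"
  defines "a \<equiv> act M r N t"
  shows "t \<cdot> Tm (Ev M N \<cdot> (a \<otimes> idm M))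
       = (Ev M N \<cdot> (a \<otimes> idm M)) \<cdot> (Mu (Ih M N) \<otimes> r) \<cdot> T2 (To (Ih M N)) M"
proof -
  note m = m1 m2 is_modD[OF m1] is_modD[OF m2] act_typ[OF m1 m2]
  have ma: "ar a" "dm a = To (Ih M N)" "cd a = Ih M N" "Ih M N \<in> Ob" using m unfolding a_def by simp_all
  have E: "Ev M N \<cdot> (a \<otimes> r) \<cdot> T2 (Ih M N) M = t \<cdot> Tm (Ev M N)" unfolding a_def by (rule ev_linear[OF m1 m2])
  define X where "X = Ev M N \<cdot> ((a \<cdot> Mu (Ih M N)) \<otimes> r) \<cdot> T2 (To (Ih M N)) M"
  have "X \<cdot> Tm (partial_action (Ih M N) M r)
      = Ev M N \<cdot> ((a \<cdot> Mu (Ih M N)) \<otimes> r) \<cdot> (Tm (idm (To (Ih M N))) \<otimes> Tm r) \<cdot> T2 (To (Ih M N)) (To M) \<cdot> Tm (T2 (Ih M N) M)"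
    unfolding X_def partial_action_def using m ma by (simp add: comp_reassoc[OF t2_nat])
  also have "\<dots> = Ev M N \<cdot> (a \<otimes> r) \<cdot> (Mu (Ih M N) \<otimes> Mu M) \<cdot> T2 (To (Ih M N)) (To M) \<cdot> Tm (T2 (Ih M N) M)"
    using m ma by (simp add: interchange interchange_comp)
  also have "\<dots> = Ev M N \<cdot> (a \<otimes> r) \<cdot> T2 (Ih M N) M \<cdot> Mu ((Ih M N) \<odot> M)"
    using m ma by (simp add: t2_mu comp_reassoc[OF t2_mu])
  also have "\<dots> = t \<cdot> Tm (Ev M N) \<cdot> Mu ((Ih M N) \<odot> M)"
    using m ma by (simp add: comp_reassoc3[OF E])
  also have "\<dots> = t \<cdot> Tm t \<cdot> Tm (Tm (Ev M N))"
    using m ma by (simp add: mu_nat comp_reassoc[OF is_modD(5)[OF m2]])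
  also have "\<dots> = t \<cdot> Tm (Ev M N \<cdot> (a \<otimes> r) \<cdot> T2 (Ih M N) M)"
    using m ma E[THEN arg_cong[where f=Tm]] by simp
  also have "\<dots> = t \<cdot> Tm (Ev M N \<cdot> (a \<otimes> idm M) \<cdot> partial_action (Ih M N) M r)"
    unfolding partial_action_def using m ma by (simp add: interchange interchange_comp)
  finally have "X \<cdot> Tm (partial_action (Ih M N) M r)
      = (t \<cdot> Tm (Ev M N \<cdot> (a \<otimes> idm M))) \<cdot> Tm (partial_action (Ih M N) M r)"
    using m ma by simp
  then have "X = t \<cdot> Tm (Ev M N \<cdot> (a \<otimes> idm M))"
    by (rule partial_action_cancel_T[OF antipode_fusion_sections ma(4) m1, rotated -1])
      (use m ma in \<open>simp_all add: X_def\<close>)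
  then show ?thesis unfolding X_def using m ma by (simp add: interchange interchange_comp)
qed

lemma act_assoc: assumes m1: "is_mod M r" and m2: "is_mod N t"
  shows "act M r N t \<cdot> Tm (act M r N t) = act M r N t \<cdot> Mu (Ih M N)"
  using act_transpose_linear[OF m1 m2 free_mod _ _ _ ev_act_linear[OF m1 m2] _ _ _ refl]
    is_modD[OF m1] is_modD[OF m2] act_typ[OF m1 m2] by simp

lemma act_mod: assumes m1: "is_mod M r" and m2: "is_mod N t"
  shows "is_mod (Ih M N) (act M r N t)"
  unfolding is_mod_def em_ob_iff
  using act_typ[OF m1 m2] act_unit[OF m1 m2] act_assoc[OF m1 m2] is_modD[OF m1] is_modD[OF m2] by simp

lemma antipode_ihom: assumes m1: "is_mod M r" and m2: "is_mod N t"
  shows "is_left_ihom (EM C T) (M, r) (N, t) (Ih M N, act M r N t) (Ev M N)"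
  unfolding is_left_ihom_def
proof (intro conjI ballI)
  note m = m1 m2 is_modD[OF m1] is_modD[OF m2] act_typ[OF m1 m2]
  have am: "is_mod (Ih M N) (act M r N t)" by (rule act_mod[OF m1 m2])
  then show "(Ih M N, act M r N t) \<in> c_ob (EM C T)" unfolding is_mod_def by simp
  have "is_mod (Ih M N \<odot> M) ((act M r N t \<otimes> r) \<cdot> T2 (Ih M N) M)" by (rule tensor_mod[OF am m1])
  then show "Ev M N \<in> c_hom (EM C T) (c_tens_o (EM C T) (Ih M N, act M r N t) (M, r)) (N, t)"
    using m2 m ev_linear[OF m1 m2] unfolding is_mod_def by simp
  fix A f assume A: "A \<in> c_ob (EM C T)" and f: "f \<in> c_hom (EM C T) (c_tens_o (EM C T) A (M, r)) (N, t)"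
  obtain B p where Bp: "A = (B, p)" by (cases A)
  have m3: "is_mod B p" using A Bp unfolding is_mod_def by simp
  have f1: "ar f" "dm f = B \<odot> M" "cd f = N" "t \<cdot> Tm f = f \<cdot> (p \<otimes> r) \<cdot> T2 B M"
    using f Bp by simp_all
  obtain g where g: "ar g" "dm g = B" "cd g = Ih M N" "Ev M N \<cdot> (g \<otimes> idm M) = f"
    by (rule ev_transpose[of M N B f]) (use m is_modD[OF m3] f1 in auto)
  have lin: "act M r N t \<cdot> Tm g = g \<cdot> p" by (rule act_transpose_linear[OF m1 m2 m3 f1 g])
  show "\<exists>!g. g \<in> c_hom (EM C T) A (Ih M N, act M r N t) \<and>
      c_comp (EM C T) (Ev M N) (c_tens_m (EM C T) g (c_id (EM C T) (M, r))) = f"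
  proof (rule ex1I[of _ g])
    fix g' assume "g' \<in> c_hom (EM C T) A (Ih M N, act M r N t) \<and>
      c_comp (EM C T) (Ev M N) (c_tens_m (EM C T) g' (c_id (EM C T) (M, r))) = f"
    then have g': "ar g'" "dm g' = B" "cd g' = Ih M N" "Ev M N \<cdot> (g' \<otimes> idm M) = f" using Bp by simp_all
    show "g' = g" by (rule ev_uniq[of M N]) (use g g' m in simp_all)
  qed (use Bp m3 am g lin in \<open>simp add: is_mod_def\<close>)
qed

text \<open>Choosing these internal Homs, the comparison maps of \<open>U\<^sub>T\<close> are identities.\<close>

lemma antipode_closed: "\<exists>H e. left_closed_via (EM C T) H e \<and> forgetful_left_closed C L T H e"
proof (intro exI conjI)
  let ?H = "\<lambda>P Q. (Ih (fst P) (fst Q), act (fst P) (snd P) (fst Q) (snd Q))"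
  let ?e = "\<lambda>P Q. Ev (fst P) (fst Q)"
  show "left_closed_via (EM C T) ?H ?e"
    unfolding left_closed_via_def is_mod_def [symmetric]
    using antipode_ihom by (auto simp: is_mod_def)
  show "forgetful_left_closed C L T ?H ?e"
    unfolding forgetful_left_closed_def
  proof (intro allI impI)
    fix M r N t assume "(M, r) \<in> em_ob C T" "(N, t) \<in> em_ob C T"
    then have ob: "M \<in> Ob" "N \<in> Ob" using em_ob_iff by auto
    show "\<exists>\<phi>. \<phi> \<in> Hom (fst (?H (M, r) (N, t))) (Ih M N) \<and> Ev M N \<cdot> (\<phi> \<otimes> idm M) = ?e (M, r) (N, t) \<and>
            iso C \<phi> (fst (?H (M, r) (N, t))) (Ih M N)"
      by (rule exI[of _ "idm (Ih M N)"]) (use ob id_hom in \<open>simp add: iso_def hom_iff\<close>)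
  qed
qed

end

text \<open>(ii) \<open>\<Longrightarrow>\<close> (i): from internal Homs in \<open>C\<^sup>T\<close>, preserved by \<open>U\<^sub>T\<close>, we build inverses
  of the fusion operators.\<close>

context fixes H e assumes closed_EM: "left_closed_via (EM C T) H e"
  and forgetful_closed: "forgetful_left_closed C L T H e"
begin

lemma ihom_mod: "is_mod M r \<Longrightarrow> is_mod N t \<Longrightarrow> is_mod (fst (H (M, r) (N, t))) (snd (H (M, r) (N, t)))"
  using closed_EM unfolding left_closed_via_def is_left_ihom_def is_mod_def by simp

lemma ihom_ev: assumes "is_mod M r" "is_mod N t"
  shows "ar (e (M, r) (N, t))" "dm (e (M, r) (N, t)) = fst (H (M, r) (N, t)) \<odot> M"
    "cd (e (M, r) (N, t)) = N"
    "t \<cdot> Tm (e (M, r) (N, t)) = e (M, r) (N, t) \<cdot> (snd (H (M, r) (N, t)) \<otimes> r) \<cdot> T2 (fst (H (M, r) (N, t))) M"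
proof -
  have "e (M, r) (N, t) \<in> c_hom (EM C T) (c_tens_o (EM C T) (H (M, r) (N, t)) (M, r)) (N, t)"
    using closed_EM assms unfolding left_closed_via_def is_left_ihom_def is_mod_def by simp
  moreover obtain I a where "H (M, r) (N, t) = (I, a)" by (cases "H (M, r) (N, t)")
  ultimately show "ar (e (M, r) (N, t))" "dm (e (M, r) (N, t)) = fst (H (M, r) (N, t)) \<odot> M"
    "cd (e (M, r) (N, t)) = N"
    "t \<cdot> Tm (e (M, r) (N, t)) = e (M, r) (N, t) \<cdot> (snd (H (M, r) (N, t)) \<otimes> r) \<cdot> T2 (fst (H (M, r) (N, t))) M"
    by simp_all
qed

lemma ihom_univ: assumes "is_mod M r" "is_mod N t" "A \<in> em_ob C T"
  "f \<in> c_hom (EM C T) (c_tens_o (EM C T) A (M, r)) (N, t)"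
  shows "\<exists>!g. g \<in> c_hom (EM C T) A (H (M, r) (N, t)) \<and> e (M, r) (N, t) \<cdot> (g \<otimes> idm M) = f"
proof -
  have "is_left_ihom (EM C T) (M, r) (N, t) (H (M, r) (N, t)) (e (M, r) (N, t))"
    using closed_EM assms unfolding left_closed_via_def is_mod_def by simp
  then show ?thesis using assms(3,4) unfolding is_left_ihom_def by simp
qed

text \<open>The comparison isomorphism \<open>U[(M,r),(N,t)] \<cong> [M,N]\<^sup>l\<close> transports the universal property
  of \<open>[M,N]\<^sup>l\<close> to the underlying object of the internal Hom of modules.\<close>

lemma ihom_comparison: assumes "is_mod M r" "is_mod N t"
  obtains \<phi> \<psi> where "ar \<phi>" "dm \<phi> = fst (H (M, r) (N, t))" "cd \<phi> = Ih M N"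
    "Ev M N \<cdot> (\<phi> \<otimes> idm M) = e (M, r) (N, t)" "ar \<psi>" "dm \<psi> = Ih M N" "cd \<psi> = fst (H (M, r) (N, t))"
    "\<psi> \<cdot> \<phi> = idm (fst (H (M, r) (N, t)))" "\<phi> \<cdot> \<psi> = idm (Ih M N)"
proof -
  obtain \<phi> where p: "\<phi> \<in> Hom (fst (H (M, r) (N, t))) (Ih M N)" "Ev M N \<cdot> (\<phi> \<otimes> idm M) = e (M, r) (N, t)"
    "iso C \<phi> (fst (H (M, r) (N, t))) (Ih M N)"
    using forgetful_closed assms unfolding forgetful_left_closed_def is_mod_def by blast
  then obtain \<psi> where "\<psi> \<in> Hom (Ih M N) (fst (H (M, r) (N, t)))"
    "\<psi> \<cdot> \<phi> = idm (fst (H (M, r) (N, t)))" "\<phi> \<cdot> \<psi> = idm (Ih M N)"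
    unfolding iso_def by blast
  then show thesis using that p hom_iff by blast
qed

lemma ihom_ev_cancel: assumes m1: "is_mod M r" and m2: "is_mod N t"
  and w: "ar w1" "ar w2" "dm w1 = dm w2" "cd w1 = fst (H (M, r) (N, t))" "cd w2 = fst (H (M, r) (N, t))"
  and eq: "e (M, r) (N, t) \<cdot> (w1 \<otimes> idm M) = e (M, r) (N, t) \<cdot> (w2 \<otimes> idm M)"
  shows "w1 = w2"
proof -
  note m = is_modD[OF m1] is_modD[OF m2]
  obtain \<phi> \<psi> where p: "ar \<phi>" "dm \<phi> = fst (H (M, r) (N, t))" "cd \<phi> = Ih M N"
    "Ev M N \<cdot> (\<phi> \<otimes> idm M) = e (M, r) (N, t)" "ar \<psi>" "dm \<psi> = Ih M N"
    "\<psi> \<cdot> \<phi> = idm (fst (H (M, r) (N, t)))"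
    using ihom_comparison[OF m1 m2] by metis
  have "Ev M N \<cdot> ((\<phi> \<cdot> w1) \<otimes> idm M) = e (M, r) (N, t) \<cdot> (w1 \<otimes> idm M)"
    using p w m by (simp add: interchange interchange_comp flip: p(4))
  also have "\<dots> = Ev M N \<cdot> ((\<phi> \<cdot> w2) \<otimes> idm M)"
    using p w m eq by (simp add: interchange interchange_comp flip: p(4))
  finally have "\<phi> \<cdot> w1 = \<phi> \<cdot> w2" by (rule ev_uniq[of M N, rotated -1]) (use p w m in simp_all)
  then have "\<psi> \<cdot> \<phi> \<cdot> w1 = \<psi> \<cdot> \<phi> \<cdot> w2" by simp
  then show ?thesis using p w by (simp flip: assoc)
qed

lemma ihom_ev_transpose: assumes m1: "is_mod M r" and m2: "is_mod N t" and B: "B \<in> Ob"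
  and f: "ar f" "dm f = B \<odot> M" "cd f = N"
  obtains w where "ar w" "dm w = B" "cd w = fst (H (M, r) (N, t))" "e (M, r) (N, t) \<cdot> (w \<otimes> idm M) = f"
proof -
  note m = is_modD[OF m1] is_modD[OF m2]
  obtain \<phi> \<psi> where p: "ar \<phi>" "dm \<phi> = fst (H (M, r) (N, t))" "cd \<phi> = Ih M N"
    "Ev M N \<cdot> (\<phi> \<otimes> idm M) = e (M, r) (N, t)" "ar \<psi>" "dm \<psi> = Ih M N" "cd \<psi> = fst (H (M, r) (N, t))"
    "\<phi> \<cdot> \<psi> = idm (Ih M N)"
    using ihom_comparison[OF m1 m2] by metis
  obtain g where g: "ar g" "dm g = B" "cd g = Ih M N" "Ev M N \<cdot> (g \<otimes> idm M) = f"
    by (rule ev_transpose[of M N B f]) (use m f B in auto)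
  have "e (M, r) (N, t) \<cdot> ((\<psi> \<cdot> g) \<otimes> idm M) = Ev M N \<cdot> ((\<phi> \<cdot> \<psi> \<cdot> g) \<otimes> idm M)"
    using p g m by (simp add: interchange interchange_comp flip: p(4))
  also have "\<dots> = f" using p g m by (simp flip: assoc)
  finally show thesis using that[of "\<psi> \<cdot> g"] p g by simp
qed

text \<open>A linear map out of \<open>(TX, \<mu>) \<otimes> (TY, \<mu>)\<close> is determined by its restriction along
  \<open>\<eta>\<^sub>X \<otimes> TY\<close>: transposing along the internal Hom \<open>[(TY,\<mu>),-]\<close> reduces this to the
  corresponding fact for the free module \<open>TX\<close>.\<close>

lemma free_tensor_mod_uniq: assumes X: "X \<in> Ob" and Y: "Y \<in> Ob" and mN: "is_mod N t"
  and u: "ar u1" "ar u2" "dm u1 = To X \<odot> To Y" "dm u2 = To X \<odot> To Y" "cd u1 = N" "cd u2 = N"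
  and l: "t \<cdot> Tm u1 = u1 \<cdot> (Mu X \<otimes> Mu Y) \<cdot> T2 (To X) (To Y)"
    "t \<cdot> Tm u2 = u2 \<cdot> (Mu X \<otimes> Mu Y) \<cdot> T2 (To X) (To Y)"
  and eq: "u1 \<cdot> (Eta X \<otimes> idm (To Y)) = u2 \<cdot> (Eta X \<otimes> idm (To Y))"
  shows "u1 = u2"
proof -
  have fX: "is_mod (To X) (Mu X)" and fY: "is_mod (To Y) (Mu Y)" using free_mod X Y by auto
  define J where "J = fst (H (To Y, Mu Y) (N, t))"
  define j where "j = snd (H (To Y, Mu Y) (N, t))"
  define \<epsilon> where "\<epsilon> = e (To Y, Mu Y) (N, t)"
  have mJ: "is_mod J j" unfolding J_def j_def by (rule ihom_mod[OF fY mN])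
  have \<epsilon>: "ar \<epsilon>" "dm \<epsilon> = J \<odot> To Y" "cd \<epsilon> = N" unfolding \<epsilon>_def J_def using ihom_ev[OF fY mN] by simp_all
  have transpose: "\<exists>v. ar v \<and> dm v = To X \<and> cd v = J \<and> j \<cdot> Tm v = v \<cdot> Mu X \<and> \<epsilon> \<cdot> (v \<otimes> idm (To Y)) = u"
    if "ar u" "dm u = To X \<odot> To Y" "cd u = N" "t \<cdot> Tm u = u \<cdot> (Mu X \<otimes> Mu Y) \<cdot> T2 (To X) (To Y)" for u
  proof -
    have "u \<in> c_hom (EM C T) (c_tens_o (EM C T) (To X, Mu X) (To Y, Mu Y)) (N, t)"
      using that tensor_mod[OF fX fY] mN unfolding is_mod_def by simp
    from ex1_implies_ex[OF ihom_univ[OF fY mN _ this]] fX show ?thesis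
      unfolding J_def j_def \<epsilon>_def is_mod_def by (cases "H (To Y, Mu Y) (N, t)") auto
  qed
  obtain v1 where v1: "ar v1" "dm v1 = To X" "cd v1 = J" "j \<cdot> Tm v1 = v1 \<cdot> Mu X" "\<epsilon> \<cdot> (v1 \<otimes> idm (To Y)) = u1"
    using transpose[OF u(1,3,5) l(1)] by blast
  obtain v2 where v2: "ar v2" "dm v2 = To X" "cd v2 = J" "j \<cdot> Tm v2 = v2 \<cdot> Mu X" "\<epsilon> \<cdot> (v2 \<otimes> idm (To Y)) = u2"
    using transpose[OF u(2,4,6) l(2)] by blast
  have "\<epsilon> \<cdot> ((v1 \<cdot> Eta X) \<otimes> idm (To Y)) = u1 \<cdot> (Eta X \<otimes> idm (To Y))"
    using v1 X Y \<epsilon> by (simp add: interchange interchange_comp comp_reassoc[OF v1(5)] flip: v1(5))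
  also have "\<dots> = \<epsilon> \<cdot> ((v2 \<cdot> Eta X) \<otimes> idm (To Y))"
    using v2 X Y \<epsilon> eq by (simp add: interchange interchange_comp comp_reassoc[OF v2(5)] flip: v2(5))
  finally have "v1 \<cdot> Eta X = v2 \<cdot> Eta X" unfolding \<epsilon>_def
    by (rule ihom_ev_cancel[OF fY mN, rotated -1]) (use v1 v2 X J_def in simp_all)
  then have "v1 = v2" by (rule free_mod_uniq[OF mJ X, rotated -1]) (use v1 v2 in simp_all)
  then show ?thesis using v1(5) v2(5) by simp
qed

text \<open>The candidate inverse of \<open>H\<^sup>l\<^sub>X\<^sub>,\<^sub>Y\<close>: transpose the unit \<open>\<eta> : X \<otimes> TY \<rightarrow> T(X \<otimes> TY)\<close>
  along the internal Hom \<open>[(TY,\<mu>),(T(X \<otimes> TY),\<mu>)]\<close>, extend it linearly over \<open>TX\<close> and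
  evaluate.\<close>

lemma fusion_inverse_candidate: assumes X: "X \<in> Ob" and Y: "Y \<in> Ob"
  obtains G where "ar G" "dm G = To X \<odot> To Y" "cd G = To (X \<odot> To Y)"
    "G \<cdot> (Eta X \<otimes> idm (To Y)) = Eta (X \<odot> To Y)"
    "Mu (X \<odot> To Y) \<cdot> Tm G = G \<cdot> (Mu X \<otimes> Mu Y) \<cdot> T2 (To X) (To Y)"
proof -
  have fY: "is_mod (To Y) (Mu Y)" and fN: "is_mod (To (X \<odot> To Y)) (Mu (X \<odot> To Y))"
    using free_mod X Y by auto
  define I where "I = fst (H (To Y, Mu Y) (To (X \<odot> To Y), Mu (X \<odot> To Y)))"
  define a where "a = snd (H (To Y, Mu Y) (To (X \<odot> To Y), Mu (X \<odot> To Y)))"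
  define \<epsilon> where "\<epsilon> = e (To Y, Mu Y) (To (X \<odot> To Y), Mu (X \<odot> To Y))"
  have mI: "is_mod I a" unfolding I_def a_def by (rule ihom_mod[OF fY fN])
  note mi = is_modD[OF mI]
  have \<epsilon>: "ar \<epsilon>" "dm \<epsilon> = I \<odot> To Y" "cd \<epsilon> = To (X \<odot> To Y)"
    "Mu (X \<odot> To Y) \<cdot> Tm \<epsilon> = \<epsilon> \<cdot> (a \<otimes> Mu Y) \<cdot> T2 I (To Y)"
    unfolding \<epsilon>_def I_def a_def using ihom_ev[OF fY fN] by simp_all
  obtain w where w: "ar w" "dm w = X" "cd w = I" "\<epsilon> \<cdot> (w \<otimes> idm (To Y)) = Eta (X \<odot> To Y)"
    using ihom_ev_transpose[OF fY fN X, of "Eta (X \<odot> To Y)"] X Y unfolding \<epsilon>_def I_def by auto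
  define v where "v = a \<cdot> Tm w"
  have v: "ar v" "dm v = To X" "cd v = I" "a \<cdot> Tm v = v \<cdot> Mu X" "v \<cdot> Eta X = w"
    unfolding v_def using free_extension[OF mI w(1-3)] w mi by simp_all
  show thesis
  proof (rule that[of "\<epsilon> \<cdot> (v \<otimes> idm (To Y))"])
    show "(\<epsilon> \<cdot> (v \<otimes> idm (To Y))) \<cdot> (Eta X \<otimes> idm (To Y)) = Eta (X \<odot> To Y)"
      using v \<epsilon> X Y w by (simp add: interchange interchange_comp)
    have "Mu (X \<odot> To Y) \<cdot> Tm (\<epsilon> \<cdot> (v \<otimes> idm (To Y))) = \<epsilon> \<cdot> (a \<otimes> Mu Y) \<cdot> T2 I (To Y) \<cdot> Tm (v \<otimes> idm (To Y))"
      using v \<epsilon> X Y mi by (simp add: comp_reassoc[OF \<epsilon>(4)])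
    also have "\<dots> = \<epsilon> \<cdot> (a \<otimes> Mu Y) \<cdot> (Tm v \<otimes> Tm (idm (To Y))) \<cdot> T2 (To X) (To Y)"
      using v \<epsilon> X Y mi by (simp add: t2_nat comp_reassoc[OF t2_nat])
    also have "\<dots> = (\<epsilon> \<cdot> (v \<otimes> idm (To Y))) \<cdot> (Mu X \<otimes> Mu Y) \<cdot> T2 (To X) (To Y)"
      using v \<epsilon> X Y mi by (simp add: interchange interchange_comp)
    finally show "Mu (X \<odot> To Y) \<cdot> Tm (\<epsilon> \<cdot> (v \<otimes> idm (To Y)))
        = (\<epsilon> \<cdot> (v \<otimes> idm (To Y))) \<cdot> (Mu X \<otimes> Mu Y) \<cdot> T2 (To X) (To Y)" .
  qed (use v \<epsilon> X Y in simp_all)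
qed

text \<open>Both composites of the candidate with the fusion operator are linear maps which agree
  with the identity after restriction along the unit, hence are identities.\<close>

lemma closed_hopf: "left_hopf C T"
  unfolding left_hopf_def fusion_def[symmetric]
proof (intro ballI)
  fix X Y assume X: "X \<in> Ob" and Y: "Y \<in> Ob"
  obtain G where G: "ar G" "dm G = To X \<odot> To Y" "cd G = To (X \<odot> To Y)"
    and G_eta: "G \<cdot> (Eta X \<otimes> idm (To Y)) = Eta (X \<odot> To Y)"
    and G_lin: "Mu (X \<odot> To Y) \<cdot> Tm G = G \<cdot> (Mu X \<otimes> Mu Y) \<cdot> T2 (To X) (To Y)"
    using fusion_inverse_candidate[OF X Y] by blast
  have GH: "G \<cdot> fusion X Y = idm (To (X \<odot> To Y))"
  proof (rule free_mod_uniq[OF free_mod])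
    show "Mu (X \<odot> To Y) \<cdot> Tm (G \<cdot> fusion X Y) = (G \<cdot> fusion X Y) \<cdot> Mu (X \<odot> To Y)"
      using G X Y by (simp add: comp_reassoc[OF G_lin] fusion_linear)
  qed (use G X Y in \<open>simp_all add: fusion_eta G_eta\<close>)
  have HG: "fusion X Y \<cdot> G = idm (To X \<odot> To Y)"
  proof (rule free_tensor_mod_uniq[OF X Y tensor_mod[OF free_mod free_mod]])
    show "((Mu X \<otimes> Mu Y) \<cdot> T2 (To X) (To Y)) \<cdot> Tm (fusion X Y \<cdot> G)
        = (fusion X Y \<cdot> G) \<cdot> (Mu X \<otimes> Mu Y) \<cdot> T2 (To X) (To Y)"
      using G X Y by (simp add: comp_reassoc3[OF fusion_linear] G_lin)
  qed (use G X Y in \<open>simp_all add: fusion_eta G_eta\<close>)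
  show "iso C (fusion X Y) (To (X \<odot> To Y)) (To X \<odot> To Y)"
    unfolding iso_def using GH HG G X Y hom_iff by auto
qed

end

text \<open>(i) \<open>\<Longrightarrow>\<close> (iii): for a left Hopf monad, the antipode is the transpose of
  \<open>T(ev) (H\<^sup>l)\<^sup>-\<^sup>1 (1 \<otimes> \<eta>\<^sub>X) : T[TX,Y]\<^sup>l \<otimes> X \<rightarrow> TY\<close>.\<close>

context assumes hopf: "left_hopf C T"
begin

definition fusion_inv :: "'o \<Rightarrow> 'o \<Rightarrow> 'm" where
  "fusion_inv X Y = (SOME g. g \<in> Hom (To X \<odot> To Y) (To (X \<odot> To Y)) \<and>
     g \<cdot> fusion X Y = idm (To (X \<odot> To Y)) \<and> fusion X Y \<cdot> g = idm (To X \<odot> To Y))"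

lemma fusion_inv_prop: assumes "X \<in> Ob" "Y \<in> Ob"
  shows "ar (fusion_inv X Y)" "dm (fusion_inv X Y) = To X \<odot> To Y" "cd (fusion_inv X Y) = To (X \<odot> To Y)"
    "fusion_inv X Y \<cdot> fusion X Y = idm (To (X \<odot> To Y))" "fusion X Y \<cdot> fusion_inv X Y = idm (To X \<odot> To Y)"
proof -
  have "iso C (fusion X Y) (To (X \<odot> To Y)) (To X \<odot> To Y)"
    using hopf assms unfolding left_hopf_def fusion_def by blast
  then have "\<exists>g. g \<in> Hom (To X \<odot> To Y) (To (X \<odot> To Y)) \<and>
      g \<cdot> fusion X Y = idm (To (X \<odot> To Y)) \<and> fusion X Y \<cdot> g = idm (To X \<odot> To Y)"
    unfolding iso_def by blast
  from someI_ex[OF this] show "ar (fusion_inv X Y)" "dm (fusion_inv X Y) = To X \<odot> To Y"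
    "cd (fusion_inv X Y) = To (X \<odot> To Y)" "fusion_inv X Y \<cdot> fusion X Y = idm (To (X \<odot> To Y))"
    "fusion X Y \<cdot> fusion_inv X Y = idm (To X \<odot> To Y)"
    unfolding fusion_inv_def[symmetric] using hom_iff by auto
qed

lemma fusion_inv_ar[simp]: "X \<in> Ob \<Longrightarrow> Y \<in> Ob \<Longrightarrow> ar (fusion_inv X Y)"
  and fusion_inv_dm[simp]: "X \<in> Ob \<Longrightarrow> Y \<in> Ob \<Longrightarrow> dm (fusion_inv X Y) = To X \<odot> To Y"
  and fusion_inv_cd[simp]: "X \<in> Ob \<Longrightarrow> Y \<in> Ob \<Longrightarrow> cd (fusion_inv X Y) = To (X \<odot> To Y)"
  using fusion_inv_prop by auto

lemma fusion_inv_conj: assumes X1: "X1 \<in> Ob" "Y1 \<in> Ob" and X2: "X2 \<in> Ob" "Y2 \<in> Ob"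
  and A: "ar A" "dm A = To (X2 \<odot> To Y2)" "cd A = To (X1 \<odot> To Y1)"
  and B: "ar B" "dm B = To X2 \<odot> To Y2" "cd B = To X1 \<odot> To Y1"
  and eq: "fusion X1 Y1 \<cdot> A = B \<cdot> fusion X2 Y2"
  shows "fusion_inv X1 Y1 \<cdot> B = A \<cdot> fusion_inv X2 Y2"
proof -
  note i1 = fusion_inv_prop[OF X1] and i2 = fusion_inv_prop[OF X2]
  have "fusion_inv X1 Y1 \<cdot> B = fusion_inv X1 Y1 \<cdot> B \<cdot> fusion X2 Y2 \<cdot> fusion_inv X2 Y2"
    using i1 i2 A B X1 X2 by simp
  also have "\<dots> = fusion_inv X1 Y1 \<cdot> fusion X1 Y1 \<cdot> A \<cdot> fusion_inv X2 Y2"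
    using A B X1 X2 by (simp add: comp_reassoc[OF eq[symmetric]])
  also have "\<dots> = A \<cdot> fusion_inv X2 Y2"
    using i1 i2 A B X1 X2 by (simp add: comp_reassoc[OF i1(4)])
  finally show ?thesis .
qed

lemma fusion_inv_nat_l: assumes f: "ar f" and Y: "Y \<in> Ob"
  shows "fusion_inv (cd f) Y \<cdot> (Tm f \<otimes> idm (To Y)) = Tm (f \<otimes> idm (To Y)) \<cdot> fusion_inv (dm f) Y"
proof (rule fusion_inv_conj)
  have "fusion (cd f) Y \<cdot> Tm (f \<otimes> idm (To Y))
      = (idm (To (cd f)) \<otimes> Mu Y) \<cdot> (Tm f \<otimes> Tm (idm (To Y))) \<cdot> T2 (dm f) (To Y)"
    unfolding fusion_def using f Y by (simp add: t2_nat comp_reassoc[OF t2_nat])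
  then show "fusion (cd f) Y \<cdot> Tm (f \<otimes> idm (To Y)) = (Tm f \<otimes> idm (To Y)) \<cdot> fusion (dm f) Y"
    unfolding fusion_def using f Y by (simp add: interchange interchange_comp)
qed (use f Y in simp_all)

lemma fusion_inv_nat_r: assumes X: "X \<in> Ob" and g: "ar g"
  shows "fusion_inv X (cd g) \<cdot> (idm (To X) \<otimes> Tm g) = Tm (idm X \<otimes> Tm g) \<cdot> fusion_inv X (dm g)"
proof (rule fusion_inv_conj)
  have "fusion X (cd g) \<cdot> Tm (idm X \<otimes> Tm g)
      = (idm (To X) \<otimes> Mu (cd g)) \<cdot> (Tm (idm X) \<otimes> Tm (Tm g)) \<cdot> T2 X (To (dm g))"
    unfolding fusion_def using X g by (simp add: t2_nat comp_reassoc[OF t2_nat])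
  also have "\<dots> = (idm (To X) \<otimes> (Mu (cd g) \<cdot> Tm (Tm g))) \<cdot> T2 X (To (dm g))"
    using X g by (simp add: interchange interchange_comp)
  finally show "fusion X (cd g) \<cdot> Tm (idm X \<otimes> Tm g) = (idm (To X) \<otimes> Tm g) \<cdot> fusion X (dm g)"
    unfolding fusion_def using X g by (simp add: interchange interchange_comp mu_nat[OF _ refl refl])
qed (use X g in simp_all)

lemma fusion_inv_mu: assumes X: "X \<in> Ob" and Y: "Y \<in> Ob"
  shows "fusion_inv X Y \<cdot> (idm (To X) \<otimes> Mu Y) = Tm (idm X \<otimes> Mu Y) \<cdot> fusion_inv X (To Y)"
proof (rule fusion_inv_conj)
  have "fusion X Y \<cdot> Tm (idm X \<otimes> Mu Y) = (idm (To X) \<otimes> Mu Y) \<cdot> (Tm (idm X) \<otimes> Tm (Mu Y)) \<cdot> T2 X (To (To Y))"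
    unfolding fusion_def using X Y by (simp add: t2_nat comp_reassoc[OF t2_nat])
  also have "\<dots> = (idm (To X) \<otimes> (Mu Y \<cdot> Tm (Mu Y))) \<cdot> T2 X (To (To Y))"
    using X Y by (simp add: interchange interchange_comp)
  finally show "fusion X Y \<cdot> Tm (idm X \<otimes> Mu Y) = (idm (To X) \<otimes> Mu Y) \<cdot> fusion X (To Y)"
    unfolding fusion_def using X Y by (simp add: interchange interchange_comp mu_assoc)
qed (use X Y in simp_all)

lemma fusion_inv_t2: assumes X: "X \<in> Ob" and Y: "Y \<in> Ob"
  shows "fusion_inv X Y \<cdot> T2 X Y = Tm (idm X \<otimes> Eta Y)"
proof -
  note i = fusion_inv_prop[OF X Y]
  have "fusion X Y \<cdot> Tm (idm X \<otimes> Eta Y) = (idm (To X) \<otimes> Mu Y) \<cdot> (Tm (idm X) \<otimes> Tm (Eta Y)) \<cdot> T2 X Y"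
    unfolding fusion_def using X Y by (simp add: t2_nat comp_reassoc[OF t2_nat])
  then have "fusion X Y \<cdot> Tm (idm X \<otimes> Eta Y) = T2 X Y"
    using X Y by (simp add: interchange interchange_comp)
  then have "fusion_inv X Y \<cdot> T2 X Y = fusion_inv X Y \<cdot> fusion X Y \<cdot> Tm (idm X \<otimes> Eta Y)" by simp
  also have "\<dots> = Tm (idm X \<otimes> Eta Y)" using i X Y by (simp add: comp_reassoc[OF i(4)])
  finally show ?thesis .
qed

definition antipode_transposed :: "'o \<Rightarrow> 'o \<Rightarrow> 'm" where
  "antipode_transposed X Y = Tm (Ev (To X) Y) \<cdot> fusion_inv (Ih (To X) Y) X \<cdot> (idm (To (Ih (To X) Y)) \<otimes> Eta X)"

lemma antipode_transposed_ar[simp]: "X \<in> Ob \<Longrightarrow> Y \<in> Ob \<Longrightarrow> ar (antipode_transposed X Y)"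
  and antipode_transposed_dm[simp]: "X \<in> Ob \<Longrightarrow> Y \<in> Ob \<Longrightarrow> dm (antipode_transposed X Y) = To (Ih (To X) Y) \<odot> X"
  and antipode_transposed_cd[simp]: "X \<in> Ob \<Longrightarrow> Y \<in> Ob \<Longrightarrow> cd (antipode_transposed X Y) = To Y"
  unfolding antipode_transposed_def by simp_all

lemma antipode_transposed_nat:
  assumes f: "ar f" "dm f = X'" "cd f = X" and g: "ar g" "dm g = Y" "cd g = Y'"
  shows "antipode_transposed X' Y' \<cdot> (Tm (Ihm (Tm f) g) \<otimes> idm X')
       = Tm g \<cdot> antipode_transposed X Y \<cdot> (idm (To (Ih (To X) Y)) \<otimes> f)"
proof -
  define W where "W = Ih (To X) Y"
  define W' where "W' = Ih (To X') Y'"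
  define k where "k = Ihm (Tm f) g"
  have ob: "X \<in> Ob" "X' \<in> Ob" "Y \<in> Ob" "Y' \<in> Ob" "W \<in> Ob" "W' \<in> Ob"
    using f g unfolding W_def W'_def by (metis dm_ob cd_ob ih_ob To_ob)+
  have k: "ar k" "dm k = W" "cd k = W'" unfolding k_def W_def W'_def using f g by simp_all
  have H_l: "fusion_inv W' X' \<cdot> (Tm k \<otimes> idm (To X')) = Tm (k \<otimes> idm (To X')) \<cdot> fusion_inv W X'"
    using fusion_inv_nat_l[OF k(1) ob(2)] k by simp
  have H_r: "fusion_inv W X \<cdot> (idm (To W) \<otimes> Tm f) = Tm (idm W \<otimes> Tm f) \<cdot> fusion_inv W X'"
    using fusion_inv_nat_r[of W f] k f ob by simp
  have ev_k: "Ev (To X') Y' \<cdot> (k \<otimes> idm (To X')) = g \<cdot> Ev (To X) Y \<cdot> (idm W \<otimes> Tm f)"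
    unfolding k_def W_def using ihm_ev[of "Tm f" g "To X'" Y' "To X" Y] f g by simp
  have "antipode_transposed X' Y' \<cdot> (Tm k \<otimes> idm X')
      = Tm (Ev (To X') Y') \<cdot> fusion_inv W' X' \<cdot> (Tm k \<otimes> idm (To X')) \<cdot> (idm (To W) \<otimes> Eta X')"
    unfolding antipode_transposed_def using ob k
    by (simp add: W_def[symmetric] W'_def[symmetric] interchange interchange_comp)
  also have "\<dots> = Tm (Ev (To X') Y' \<cdot> (k \<otimes> idm (To X'))) \<cdot> fusion_inv W X' \<cdot> (idm (To W) \<otimes> Eta X')"
    using ob k by (simp add: W_def[symmetric] W'_def[symmetric] comp_reassoc[OF H_l])
  also have "\<dots> = Tm g \<cdot> Tm (Ev (To X) Y) \<cdot> Tm (idm W \<otimes> Tm f) \<cdot> fusion_inv W X' \<cdot> (idm (To W) \<otimes> Eta X')"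
    unfolding ev_k using ob k f g W_def by simp
  also have "\<dots> = Tm g \<cdot> Tm (Ev (To X) Y) \<cdot> fusion_inv W X \<cdot> (idm (To W) \<otimes> (Tm f \<cdot> Eta X'))"
    using ob k f g by (simp add: W_def[symmetric] W'_def[symmetric] comp_reassoc[OF H_r[symmetric]] interchange interchange_comp)
  also have "\<dots> = Tm g \<cdot> antipode_transposed X Y \<cdot> (idm (To W) \<otimes> f)"
    unfolding antipode_transposed_def W_def[symmetric] using ob f
    by (simp add: W_def[symmetric] W'_def[symmetric] interchange interchange_comp flip: eta_nat[of f X X'])
  finally show ?thesis unfolding k_def W_def .
qed

lemma antipode_transposed_mu:
  assumes X: "X \<in> Ob" and Y: "Y \<in> Ob"
  shows "antipode_transposed (To X) Y \<cdot> (Tm (Ihm (Mu X) (idm Y)) \<otimes> idm (To X)) \<cdot> T2 (Ih (To X) Y) X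
       = Tm (Ev X Y \<cdot> (Ihm (Eta X) (idm Y) \<otimes> idm X))"
proof -
  define W0 where "W0 = Ih (To X) Y"
  define W1 where "W1 = Ih (To (To X)) Y"
  define k where "k = Ihm (Mu X) (idm Y)"
  have ob: "W0 \<in> Ob" "W1 \<in> Ob" unfolding W0_def W1_def using X Y by simp_all
  have k: "ar k" "dm k = W0" "cd k = W1" unfolding k_def W0_def W1_def using X Y by simp_all
  note defs = W0_def[symmetric] W1_def[symmetric]
  have H_l: "fusion_inv W1 (To X) \<cdot> (Tm k \<otimes> idm (To (To X))) = Tm (k \<otimes> idm (To (To X))) \<cdot> fusion_inv W0 (To X)"
    using fusion_inv_nat_l[OF k(1), of "To X"] k X by simp
  have ev_mu: "Tm (Ev (To (To X)) Y) \<cdot> Tm (k \<otimes> idm (To (To X))) = Tm (Ev (To X) Y) \<cdot> Tm (idm W0 \<otimes> Mu X)"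
    using ev_dinat[of "Mu X" Y "To X" "To (To X)"] X Y k ob
    unfolding k_def W0_def by (simp flip: Tm_comp)
  have ev_eta: "Tm (Ev (To X) Y) \<cdot> Tm (idm W0 \<otimes> Eta X) = Tm (Ev X Y \<cdot> (Ihm (Eta X) (idm Y) \<otimes> idm X))"
    using ev_dinat[of "Eta X" Y "To X" X] X Y ob unfolding W0_def by (simp flip: Tm_comp)
  have "antipode_transposed (To X) Y \<cdot> (Tm k \<otimes> idm (To X)) \<cdot> T2 W0 X
      = Tm (Ev (To (To X)) Y) \<cdot> fusion_inv W1 (To X) \<cdot> (Tm k \<otimes> idm (To (To X))) \<cdot> (idm (To W0) \<otimes> Eta (To X)) \<cdot> T2 W0 X"
    unfolding antipode_transposed_def using X Y ob k by (simp add: defs interchange interchange_comp)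
  also have "\<dots> = Tm (Ev (To X) Y) \<cdot> Tm (idm W0 \<otimes> Mu X) \<cdot> fusion_inv W0 (To X) \<cdot> (idm (To W0) \<otimes> Eta (To X)) \<cdot> T2 W0 X"
    using X Y ob k by (simp add: defs comp_reassoc[OF H_l] comp_reassoc[OF ev_mu])
  also have "\<dots> = Tm (Ev (To X) Y) \<cdot> fusion_inv W0 X \<cdot> T2 W0 X"
    using X Y ob k by (simp add: defs comp_reassoc[OF fusion_inv_mu[symmetric]] interchange interchange_comp)
  also have "\<dots> = Tm (Ev X Y \<cdot> (Ihm (Eta X) (idm Y) \<otimes> idm X))"
    using X Y ob by (simp add: defs fusion_inv_t2 ev_eta)
  finally show ?thesis unfolding W0_def k_def .
qed

lemma antipode_transposed_coev:
  assumes X: "X \<in> Ob" and Y: "Y \<in> Ob"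
  shows "fusion Y X \<cdot> antipode_transposed X (Y \<odot> To X) \<cdot> (Tm (Coev (To X) Y) \<otimes> idm X)
       = idm (To Y) \<otimes> Eta X"
proof -
  define Z where "Z = Y \<odot> To X"
  define W where "W = Ih (To X) Z"
  have ob: "Z \<in> Ob" "W \<in> Ob" unfolding Z_def W_def using X Y by simp_all
  note defs = Z_def[symmetric] W_def[symmetric]
  have H_l: "fusion_inv W X \<cdot> (Tm (Coev (To X) Y) \<otimes> idm (To X))
      = Tm (Coev (To X) Y \<otimes> idm (To X)) \<cdot> fusion_inv Y X"
    using fusion_inv_nat_l[of "Coev (To X) Y" X] X Y unfolding W_def Z_def by simp
  have triangle: "Tm (Ev (To X) Z) \<cdot> Tm (Coev (To X) Y \<otimes> idm (To X)) = idm (To Z)"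
    unfolding Z_def using X Y coev_triangle[of "To X" Y] by (simp flip: Tm_comp)
  have "fusion Y X \<cdot> antipode_transposed X Z \<cdot> (Tm (Coev (To X) Y) \<otimes> idm X)
      = fusion Y X \<cdot> Tm (Ev (To X) Z) \<cdot> fusion_inv W X \<cdot> (Tm (Coev (To X) Y) \<otimes> idm (To X)) \<cdot> (idm (To Y) \<otimes> Eta X)"
    unfolding antipode_transposed_def using X Y ob by (simp add: interchange interchange_comp defs)
  also have "\<dots> = fusion Y X \<cdot> fusion_inv Y X \<cdot> (idm (To Y) \<otimes> Eta X)"
    using X Y ob defs by (simp add: comp_reassoc[OF H_l] comp_reassoc[OF triangle])
  also have "\<dots> = idm (To Y) \<otimes> Eta X"
    using X Y by (simp add: comp_reassoc[OF fusion_inv_prop(5)])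
  finally show ?thesis unfolding Z_def .
qed

definition hopf_antipode :: "'o \<Rightarrow> 'o \<Rightarrow> 'm" where
  "hopf_antipode X Y = (SOME g. ar g \<and> dm g = To (Ih (To X) Y) \<and> cd g = Ih X (To Y) \<and>
     Ev X (To Y) \<cdot> (g \<otimes> idm X) = antipode_transposed X Y)"

lemma hopf_antipode_prop: assumes "X \<in> Ob" "Y \<in> Ob"
  shows "ar (hopf_antipode X Y)" "dm (hopf_antipode X Y) = To (Ih (To X) Y)"
    "cd (hopf_antipode X Y) = Ih X (To Y)" "Ev X (To Y) \<cdot> (hopf_antipode X Y \<otimes> idm X) = antipode_transposed X Y"
proof -
  have "\<exists>g. ar g \<and> dm g = To (Ih (To X) Y) \<and> cd g = Ih X (To Y) \<and> Ev X (To Y) \<cdot> (g \<otimes> idm X) = antipode_transposed X Y"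
    by (rule ev_transpose[of X "To Y" "To (Ih (To X) Y)" "antipode_transposed X Y"]) (use assms in auto)
  from someI_ex[OF this] show "ar (hopf_antipode X Y)" "dm (hopf_antipode X Y) = To (Ih (To X) Y)"
    "cd (hopf_antipode X Y) = Ih X (To Y)" "Ev X (To Y) \<cdot> (hopf_antipode X Y \<otimes> idm X) = antipode_transposed X Y"
    unfolding hopf_antipode_def[symmetric] by auto
qed

lemma hopf_antipode_ar[simp]: "X \<in> Ob \<Longrightarrow> Y \<in> Ob \<Longrightarrow> ar (hopf_antipode X Y)"
  and hopf_antipode_dm[simp]: "X \<in> Ob \<Longrightarrow> Y \<in> Ob \<Longrightarrow> dm (hopf_antipode X Y) = To (Ih (To X) Y)"
  and hopf_antipode_cd[simp]: "X \<in> Ob \<Longrightarrow> Y \<in> Ob \<Longrightarrow> cd (hopf_antipode X Y) = Ih X (To Y)"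
  using hopf_antipode_prop by auto

lemma hopf_antipode_nat:
  assumes f: "f \<in> Hom X' X" and g: "g \<in> Hom Y Y'"
  shows "hopf_antipode X' Y' \<cdot> Tm (Ihm (Tm f) g) = Ihm f (Tm g) \<cdot> hopf_antipode X Y"
proof -
  have f': "ar f" "dm f = X'" "cd f = X" and g': "ar g" "dm g = Y" "cd g = Y'" using f g hom_iff by auto
  then have ob: "X \<in> Ob" "X' \<in> Ob" "Y \<in> Ob" "Y' \<in> Ob" by (metis dm_ob cd_ob)+
  have ev_s: "Ev X (To Y) \<cdot> (hopf_antipode X Y \<otimes> idm X) = antipode_transposed X Y"
    and ev_s': "Ev X' (To Y') \<cdot> (hopf_antipode X' Y' \<otimes> idm X') = antipode_transposed X' Y'"
    using hopf_antipode_prop ob by auto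
  have ev_f: "Ev X' (To Y') \<cdot> (Ihm f (Tm g) \<otimes> idm X') = Tm g \<cdot> Ev X (To Y) \<cdot> (idm (Ih X (To Y)) \<otimes> f)"
    using ihm_ev[of f "Tm g" X' "To Y'" X "To Y"] f' g' by simp
  have "Ev X' (To Y') \<cdot> ((hopf_antipode X' Y' \<cdot> Tm (Ihm (Tm f) g)) \<otimes> idm X')
      = Ev X' (To Y') \<cdot> (hopf_antipode X' Y' \<otimes> idm X') \<cdot> (Tm (Ihm (Tm f) g) \<otimes> idm X')"
    using f' g' ob by (simp add: interchange interchange_comp)
  also have "\<dots> = Tm g \<cdot> antipode_transposed X Y \<cdot> (idm (To (Ih (To X) Y)) \<otimes> f)"
    using f' g' ob by (simp add: comp_reassoc[OF ev_s'] antipode_transposed_nat[OF f' g'])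
  also have "\<dots> = Tm g \<cdot> Ev X (To Y) \<cdot> (idm (Ih X (To Y)) \<otimes> f) \<cdot> (hopf_antipode X Y \<otimes> idm X')"
    using f' g' ob by (simp add: interchange interchange_comp flip: ev_s)
  also have "\<dots> = Ev X' (To Y') \<cdot> (Ihm f (Tm g) \<otimes> idm X') \<cdot> (hopf_antipode X Y \<otimes> idm X')"
    using f' g' ob by (simp add: comp_reassoc[OF ev_f])
  also have "\<dots> = Ev X' (To Y') \<cdot> ((Ihm f (Tm g) \<cdot> hopf_antipode X Y) \<otimes> idm X')"
    using f' g' ob by (simp add: interchange interchange_comp)
  finally show ?thesis
    by (rule ev_uniq[of X' "To Y'", rotated -1]) (use f' g' ob in simp_all)
qed

lemma hopf_antipode_ax1: assumes X: "X \<in> Ob" and Y: "Y \<in> Ob"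
  shows "Tm (Ev X Y \<cdot> (Ihm (Eta X) (idm Y) \<otimes> idm X))
    = Ev (To X) (To Y) \<cdot> ((hopf_antipode (To X) Y \<cdot> Tm (Ihm (Mu X) (idm Y))) \<otimes> idm (To X)) \<cdot> T2 (Ih (To X) Y) X"
proof -
  have ev_s: "Ev (To X) (To Y) \<cdot> (hopf_antipode (To X) Y \<otimes> idm (To X)) = antipode_transposed (To X) Y"
    using hopf_antipode_prop X Y by simp
  have "Ev (To X) (To Y) \<cdot> ((hopf_antipode (To X) Y \<cdot> Tm (Ihm (Mu X) (idm Y))) \<otimes> idm (To X)) \<cdot> T2 (Ih (To X) Y) X
      = Ev (To X) (To Y) \<cdot> (hopf_antipode (To X) Y \<otimes> idm (To X)) \<cdot> (Tm (Ihm (Mu X) (idm Y)) \<otimes> idm (To X)) \<cdot> T2 (Ih (To X) Y) X"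
    using X Y by (simp add: interchange interchange_comp)
  also have "\<dots> = Tm (Ev X Y \<cdot> (Ihm (Eta X) (idm Y) \<otimes> idm X))"
    using X Y by (simp add: comp_reassoc[OF ev_s] antipode_transposed_mu)
  finally show ?thesis by simp
qed

lemma hopf_antipode_ax2: assumes X: "X \<in> Ob" and Y: "Y \<in> Ob"
  shows "Ihm (idm X) (idm (To Y) \<otimes> Eta X) \<cdot> Coev X (To Y)
    = Ihm (idm X) (fusion Y X) \<cdot> hopf_antipode X (Y \<odot> To X) \<cdot> Tm (Coev (To X) Y)"
proof -
  define Z where "Z = Y \<odot> To X"
  have Z: "Z \<in> Ob" unfolding Z_def using X Y by simp
  have ev_s: "Ev X (To Z) \<cdot> (hopf_antipode X Z \<otimes> idm X) = antipode_transposed X Z"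
    using hopf_antipode_prop X Z by simp
  have "Ev X (To Y \<odot> To X) \<cdot> ((Ihm (idm X) (fusion Y X) \<cdot> hopf_antipode X Z \<cdot> Tm (Coev (To X) Y)) \<otimes> idm X)
      = Ev X (To Y \<odot> To X) \<cdot> (Ihm (idm X) (fusion Y X) \<otimes> idm X) \<cdot> ((hopf_antipode X Z \<cdot> Tm (Coev (To X) Y)) \<otimes> idm X)"
    using X Y Z Z_def by (simp add: interchange interchange_comp)
  also have "\<dots> = fusion Y X \<cdot> Ev X (To Z) \<cdot> ((hopf_antipode X Z \<cdot> Tm (Coev (To X) Y)) \<otimes> idm X)"
    using X Y Z Z_def by (simp add: comp_reassoc[OF ev_nat])
  also have "\<dots> = fusion Y X \<cdot> Ev X (To Z) \<cdot> (hopf_antipode X Z \<otimes> idm X) \<cdot> (Tm (Coev (To X) Y) \<otimes> idm X)"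
    using X Y Z Z_def by (simp add: interchange interchange_comp)
  also have "\<dots> = idm (To Y) \<otimes> Eta X"
    using X Y Z antipode_transposed_coev[OF X Y] by (simp add: comp_reassoc[OF ev_s] Z_def[symmetric])
  also have "\<dots> = Ev X (To Y \<odot> To X) \<cdot> ((Ihm (idm X) (idm (To Y) \<otimes> Eta X) \<cdot> Coev X (To Y)) \<otimes> idm X)"
    using coev_transpose[of X "To Y" "idm (To Y) \<otimes> Eta X"] X Y by simp
  finally show ?thesis unfolding Z_def
    by (rule ev_uniq[of X "To Y \<odot> To X", rotated -1, OF sym]) (use X Y in simp_all)
qed

lemma hopf_antipode_is_antipode: "left_antipode C L T hopf_antipode"
  unfolding left_antipode_def fusion_def[symmetric]
  using hom_iff hopf_antipode_nat hopf_antipode_ax1 hopf_antipode_ax2 by auto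

end

end

theorem mainTheorem6:
  fixes C :: "('o, 'm) mcat" and L :: "('o, 'm) lclosed" and T :: "('o, 'm) bimon"
  assumes "strict_monoidal C"
    and "left_closed_data C L"
    and "bimonad C T"
  shows "(left_hopf C T \<longleftrightarrow>
            (\<exists>H e. left_closed_via (EM C T) H e \<and> forgetful_left_closed C L T H e))
       \<and> ((\<exists>H e. left_closed_via (EM C T) H e \<and> forgetful_left_closed C L T H e) \<longleftrightarrow>
            (\<exists>s. left_antipode C L T s))
       \<and> (\<forall>s. left_antipode C L T s \<longrightarrow>
            (\<forall>M r N t. (M, r) \<in> c_ob (EM C T) \<longrightarrow> (N, t) \<in> c_ob (EM C T) \<longrightarrow>
               is_left_ihom (EM C T) (M, r) (N, t)
                 (ih L M N, ihom_action C L T s M r N t) (ev L M N)))"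
proof -
  interpret closed_bimonad C L T
    using assms by (rule closed_bimonad.intro)
  have i_iii: "left_hopf C T \<Longrightarrow> \<exists>s. left_antipode C L T s"
    using hopf_antipode_is_antipode by blast
  have iii_ii: "\<exists>s. left_antipode C L T s \<Longrightarrow>
      \<exists>H e. left_closed_via (EM C T) H e \<and> forgetful_left_closed C L T H e"
    using antipode_closed by blast
  have ii_i: "\<exists>H e. left_closed_via (EM C T) H e \<and> forgetful_left_closed C L T H e \<Longrightarrow> left_hopf C T"
    using closed_hopf by blast
  have ihom: "left_antipode C L T s \<Longrightarrow> (M, r) \<in> c_ob (EM C T) \<Longrightarrow> (N, t) \<in> c_ob (EM C T) \<Longrightarrow>
      is_left_ihom (EM C T) (M, r) (N, t) (ih L M N, ihom_action C L T s M r N t) (ev L M N)"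
    for s M r N t using antipode_ihom unfolding is_mod_def by simp
  show ?thesis using i_iii iii_ii ii_i ihom by blast
qed

end
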